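(* Let $r\ge1$ and let $[x,y]_r$ be a nonempty interval in the $r$-Bruhat order on $\mathcal S_\infty$. Let $k$ be such that $x(\alpha)=y(\alpha)=\alpha$ for all $\alpha>k+1$, with $r\le k$. Write $x_j=x(j)$ for $1\le j\le k+1$. Let $\alpha_1<\cdots<\alpha_\ell<r<\beta_1<\cdots<\beta_t<k+1$ be the positions $p\in\{1,\dots,k\}\setminus\{r\}$ with $x_p>x_{p+1}$; set $\alpha_0=0$, $\alpha_{\ell+1}=r$, $\beta_0=r$, $\beta_{t+1}=k+1$, and let $A_i=\{\alpha_{i-1}+1,\dots,\alpha_i\}$ ($1\le i\le \ell+1$), $B_m=\{\beta_{m-1}+1,\dots,\beta_m\}$ ($1\le m\le t+1$). For $j\in B_m$ put $p_j=x_j-(m-1)(k+1)$ and for $j\in A_i$ put $p_j=x_j+(\ell+2-i)(k+1)$. Listing the indices $j$ in the order $B_{t+1},B_t,\dots,B_1,A_{\ell+1},A_\ell,\dots,A_1$, each block in increasing order of $j$, assign the values $1,2,\dots,k+1$ successively, i.e. set $u'(p_j)$ equal to the rank of $j$ in this list; extend to $u':\mathbb Z\to\mathbb Z$ by $u'(p_j+m(k+1))=u'(p_j)+m(k+1)$. Let $s\in\mathbb Z$ be such that $\sum_{i=1}^{k+1}u'(i)=\binom{k+2}{2}-s(k+1)$ and define $u(i)=u'(i+s)$ for all $i\in\mathbb Z$; then $u\in W^0$. Now let $x=x^0\lessdot_r x^1\lessdot_r\cdots\lessdot_r x^n=y$ be any maximal chain in $[x,y]_r$, with $x^i=(a_i,b_i)\,x^{i-1}$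 and $a_i<b_i$. Then $u\,\mathbf{t}_{a_1-s,b_1-s}\mathbf{t}_{a_2-s,b_2-s}\cdots\mathbf{t}_{a_n-s,b_n-s}\neq0$, i.e. $\mathbf{t}_{a_1-s,b_1-s}\cdots\mathbf{t}_{a_n-s,b_n-s}$ is a nonzero maximal chain in the affine $0$-Bruhat graph in the interval from $u$ to $u\,\mathbf{t}_{a_1-s,b_1-s}\cdots\mathbf{t}_{a_n-s,b_n-s}$.
   Context: $\mathcal S_\infty$ is the group of permutations of the positive integers fixing all but finitely many; $\ell$ denotes length (number of inversions). For $r\ge1$, the $r$-Bruhat order $\le_r$ on $\mathcal S_\infty$ is the transitive closure of the covers $u\lessdot_r w$, meaning $\ell(w)=\ell(u)+1$ and $u^{-1}w=(i,j)$ is a transposition with $i\le r<j$; for such a cover one writes $wu^{-1}=(a,b)$ with $a<b$, so $w=(a,b)u$. $[x,y]_r$ is the set of elements between $x$ and $y$ in this order. Affine side: $W$ is the group of bijections $u:\mathbb Z\to\mathbb Z$ with $u(i+k+1)=u(i)+k+1$ and $u(1)+\cdots+u(k+1)=\binom{k+2}2$, with product $(uw)(i)=u(w(i))$ and Coxeter length $\ell$ with respect to the generators $s_0,\dots,s_k$ ($s_i$ swaps $i+m(k+1)$ and $i+1+m(k+1)$ for all $m$). $W^0$ is the set of $u\in W$ with $u^{-1}(1)<\cdots<u^{-1}(k+1)$. For $a<b$ with $b-a\le k$, $t_{a,b}\in W$ swaps $a+m(k+1)$ and $b+m(k+1)$ for all $m$. The operator $\mathbf{t}_{ab}$ acts on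 the right on $\mathbb ZW$ by $u\,\mathbf{t}_{ab}=ut_{a,b}$ if $\ell(ut_{a,b})=\ell(u)+1$ and $u(a)\le0<u(b)$, and $0$ otherwise (with $0\,\mathbf{t}_{cd}=0$). The affine $0$-Bruhat graph is the directed multigraph on $W$ with an edge $u\to u\,\mathbf{t}_{ab}$ (labelled $b$) for each nonzero $u\,\mathbf{t}_{ab}$. *)

theory Defs
  imports Main
begin

text \<open>Elements of S_infinity are represented as bijections of nat fixing 0
  (hence bijections of the positive integers) and fixing all but finitely many points.\<close>

definition Sinf :: "(nat \<Rightarrow> nat) set" where
  "Sinf = {f. bij f \<and> f 0 = 0 \<and> finite {i. f i \<noteq> i}}"

definition inv_len :: "(nat \<Rightarrow> nat) \<Rightarrow> nat" where
  "inv_len f = card {(i, j). 0 < i \<and> i < j \<and> f j < f i}"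

definition transp_nat :: "nat \<Rightarrow> nat \<Rightarrow> nat \<Rightarrow> nat" where
  "transp_nat i j = (\<lambda>m. if m = i then j else if m = j then i else m)"

definition rcover :: "nat \<Rightarrow> (nat \<Rightarrow> nat) \<Rightarrow> (nat \<Rightarrow> nat) \<Rightarrow> bool" where
  "rcover r u w \<longleftrightarrow> u \<in> Sinf \<and> w \<in> Sinf \<and> inv_len w = inv_len u + 1 \<and>
     (\<exists>i j. 1 \<le> i \<and> i \<le> r \<and> r < j \<and> w = u \<circ> transp_nat i j)"

definition rle :: "nat \<Rightarrow> (nat \<Rightarrow> nat) \<Rightarrow> (nat \<Rightarrow> nat) \<Rightarrow> bool" where
  "rle r = (rcover r)\<^sup>*\<^sup>*"

definition affW :: "nat \<Rightarrow> (int \<Rightarrow> int) set" where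
  "affW k = {u. bij u \<and> (\<forall>i. u (i + int k + 1) = u i + int k + 1) \<and>
                (\<Sum>i = 1..int k + 1. u i) = int ((k + 2) choose 2)}"

definition aff_s :: "nat \<Rightarrow> nat \<Rightarrow> int \<Rightarrow> int" where
  "aff_s k i = (\<lambda>z. if z mod (int k + 1) = int i mod (int k + 1) then z + 1
                   else if z mod (int k + 1) = (int i + 1) mod (int k + 1) then z - 1
                   else z)"

definition aff_len :: "nat \<Rightarrow> (int \<Rightarrow> int) \<Rightarrow> nat" where
  "aff_len k u = (LEAST n. \<exists>ws. length ws = n \<and> (\<forall>i\<in>set ws. i \<le> k) \<and>
                      u = foldr (\<lambda>i f. aff_s k i \<circ> f) ws id)"

definition affW0 :: "nat \<Rightarrow> (int \<Rightarrow> int) set" where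
  "affW0 k = {u \<in> affW k. \<forall>i j. 1 \<le> i \<and> i < j \<and> j \<le> int k + 1 \<longrightarrow> inv u i < inv u j}"

text \<open>t_{a,b} swaps a+m(k+1) and b+m(k+1) for all m (meaningful for a < b, b - a <= k).\<close>
definition aff_t :: "nat \<Rightarrow> int \<Rightarrow> int \<Rightarrow> int \<Rightarrow> int" where
  "aff_t k a b = (\<lambda>z. if z mod (int k + 1) = a mod (int k + 1) then z + (b - a)
                     else if z mod (int k + 1) = b mod (int k + 1) then z - (b - a)
                     else z)"

text \<open>Right action of the operator t_{ab} on ZW restricted to basis elements and 0;
  None represents 0.\<close>
definition tmul :: "nat \<Rightarrow> (int \<Rightarrow> int) option \<Rightarrow> int \<Rightarrow> int \<Rightarrow> (int \<Rightarrow> int) option" where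
  "tmul k uo a b = (case uo of None \<Rightarrow> None
     | Some u \<Rightarrow> if a < b \<and> b - a \<le> int k \<and>
                     aff_len k (u \<circ> aff_t k a b) = aff_len k u + 1 \<and> u a \<le> 0 \<and> 0 < u b
                  then Some (u \<circ> aff_t k a b) else None)"

definition desc :: "(nat \<Rightarrow> nat) \<Rightarrow> nat \<Rightarrow> nat \<Rightarrow> nat set" where
  "desc x k r = {p. 1 \<le> p \<and> p \<le> k \<and> p \<noteq> r \<and> x (p + 1) < x p}"

definition nA :: "(nat \<Rightarrow> nat) \<Rightarrow> nat \<Rightarrow> nat \<Rightarrow> nat" where
  "nA x k r = card {d \<in> desc x k r. d < r}"

definition nB :: "(nat \<Rightarrow> nat) \<Rightarrow> nat \<Rightarrow> nat \<Rightarrow> nat" where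
  "nB x k r = card {d \<in> desc x k r. r < d}"

definition alpha :: "(nat \<Rightarrow> nat) \<Rightarrow> nat \<Rightarrow> nat \<Rightarrow> nat \<Rightarrow> nat" where
  "alpha x k r i = (if i = 0 then 0
     else if i \<le> nA x k r then sorted_list_of_set {d \<in> desc x k r. d < r} ! (i - 1)
     else r)"

definition beta :: "(nat \<Rightarrow> nat) \<Rightarrow> nat \<Rightarrow> nat \<Rightarrow> nat \<Rightarrow> nat" where
  "beta x k r m = (if m = 0 then r
     else if m \<le> nB x k r then sorted_list_of_set {d \<in> desc x k r. r < d} ! (m - 1)
     else k + 1)"

definition blockA :: "(nat \<Rightarrow> nat) \<Rightarrow> nat \<Rightarrow> nat \<Rightarrow> nat \<Rightarrow> nat set" where
  "blockA x k r i = {alpha x k r (i - 1) + 1 .. alpha x k r i}"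

definition blockB :: "(nat \<Rightarrow> nat) \<Rightarrow> nat \<Rightarrow> nat \<Rightarrow> nat \<Rightarrow> nat set" where
  "blockB x k r m = {beta x k r (m - 1) + 1 .. beta x k r m}"

definition ppos :: "(nat \<Rightarrow> nat) \<Rightarrow> nat \<Rightarrow> nat \<Rightarrow> nat \<Rightarrow> int" where
  "ppos x k r j =
     (if j \<le> r then
        int (x j) + (int (nA x k r) + 2 - int (THE i. 1 \<le> i \<and> i \<le> nA x k r + 1 \<and> j \<in> blockA x k r i)) * (int k + 1)
      else
        int (x j) - (int (THE m. 1 \<le> m \<and> m \<le> nB x k r + 1 \<and> j \<in> blockB x k r m) - 1) * (int k + 1))"

definition order_list :: "(nat \<Rightarrow> nat) \<Rightarrow> nat \<Rightarrow> nat \<Rightarrow> nat list" where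
  "order_list x k r =
     concat (map (\<lambda>m. [beta x k r (m - 1) + 1 ..< beta x k r m + 1]) (rev [1 ..< nB x k r + 2]))
   @ concat (map (\<lambda>i. [alpha x k r (i - 1) + 1 ..< alpha x k r i + 1]) (rev [1 ..< nA x k r + 2]))"

definition apply_chain :: "nat \<Rightarrow> (int \<Rightarrow> int) \<Rightarrow> int list \<Rightarrow> int list \<Rightarrow> (int \<Rightarrow> int) option" where
  "apply_chain k u as bs = foldl (\<lambda>acc (a, b). tmul k acc a b) (Some u) (zip as bs)"

end

theory Submission
  imports Defs
begin

text \<open>Write \<open>N = k + 1\<close>. An affine permutation \<open>f\<close> is determined by a window
  representation: positions \<open>g \<alpha>\<close> and values \<open>h \<alpha>\<close> (\<open>\<alpha> = 1..N\<close>), each family pairwise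
  incongruent mod \<open>N\<close>, with \<open>f (g \<alpha> + m N) = h \<alpha> + m N\<close>. The Coxeter length of \<open>f\<close> is its
  number of affine inversions, and counting these through a window representation gives a
  term depending only on the values \<open>h\<close> plus the number of pairs \<open>\<alpha>, \<beta>\<close> whose positions and
  values are in opposite order.

  The element \<open>u\<close> has positions \<open>x \<alpha> - s\<close> and values \<open>key \<alpha>\<close>: the rank of \<open>\<alpha>\<close> in the listing
  \<open>B(t+1), \<dots>, A(1)\<close>, shifted by \<open>N\<close> times the level of its block. The function \<open>key\<close> is strictly
  increasing in \<open>\<alpha>\<close>, and positive exactly for \<open>\<alpha> > r\<close>. Right multiplication by
  \<open>t(a - s, b - s)\<close> swaps the positions \<open>a - s\<close> and \<open>b - s\<close>, so every prefix product of the chain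
  keeps the values \<open>key\<close> and has positions \<open>x\<^sup>i \<alpha> - s\<close>. Its crossing count is then \<open>\<ell>(x\<^sup>i)\<close>,
  so every step raises the affine length by exactly one; and since \<open>a = x\<^sup>i\<^sup>-\<^sup>1(i)\<close>,
  \<open>b = x\<^sup>i\<^sup>-\<^sup>1(j)\<close> with \<open>i \<le> r < j\<close>, the values at \<open>a - s\<close> and \<open>b - s\<close> are \<open>key i \<le> 0 < key j\<close>.
  Finally \<open>u \<in> W\<^sup>0\<close> because \<open>p\<^sub>j\<close> increases along the listing.\<close>

section \<open>Window representations of periodic functions\<close>

abbreviation period :: "nat \<Rightarrow> int" where "period k \<equiv> int k + 1"

definition periodic :: "nat \<Rightarrow> (int \<Rightarrow> int) \<Rightarrow> bool" where
  "periodic k f \<longleftrightarrow> (\<forall>y. f (y + period k) = f y + period k)"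

lemma periodicD:
  assumes "periodic k f"
  shows "f (y + m * period k) = f y + m * period k"
proof (induction m rule: int_induct[where k=0])
  case (step1 i)
  have "f (y + (i + 1) * period k) = f (y + i * period k + period k)"
    by (simp add: algebra_simps)
  also have "\<dots> = f (y + i * period k) + period k" using assms unfolding periodic_def by blast
  finally show ?case using step1 by (simp add: algebra_simps)
next
  case (step2 i)
  have "f (y + i * period k) = f (y + (i - 1) * period k + period k)"
    by (simp add: algebra_simps)
  also have "\<dots> = f (y + (i - 1) * period k) + period k" using assms unfolding periodic_def by blast
  finally show ?case using step2 by (simp add: algebra_simps)
qed simp

lemma periodic_comp: "periodic k f \<Longrightarrow> periodic k g \<Longrightarrow> periodic k (f \<circ> g)"
  unfolding periodic_def by simp

lemma mod_period_range: "(z::int) mod period k \<in> {0..<period k}"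
  using pos_mod_bound[of "period k" z] pos_mod_sign[of "period k" z] by simp

lemma mod_add_small_neq:
  assumes "0 < d" "d < period k"
  shows "(a + d) mod period k \<noteq> a mod period k"
proof
  assume "(a + d) mod period k = a mod period k"
  then have "period k dvd d" by (simp add: mod_eq_dvd_iff)
  then have "period k \<le> d" using assms(1) by (rule zdvd_imp_le)
  then show False using assms(2) by simp
qed

definition window_rep :: "nat \<Rightarrow> (int \<Rightarrow> int) \<Rightarrow> (nat \<Rightarrow> int) \<Rightarrow> (nat \<Rightarrow> int) \<Rightarrow> bool" where
  "window_rep k f g h \<longleftrightarrow>
     (\<forall>\<alpha>\<in>{1..Suc k}. \<forall>m. f (g \<alpha> + m * period k) = h \<alpha> + m * period k)"

lemma window_repD:
  "window_rep k f g h \<Longrightarrow> \<alpha> \<in> {1..Suc k} \<Longrightarrow> f (g \<alpha> + m * period k) = h \<alpha> + m * period k"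
  unfolding window_rep_def by blast

definition residue_inj :: "nat \<Rightarrow> (nat \<Rightarrow> int) \<Rightarrow> bool" where
  "residue_inj k g \<longleftrightarrow> inj_on (\<lambda>\<alpha>. g \<alpha> mod period k) {1..Suc k}"

lemma residue_inj_image:
  assumes "residue_inj k g"
  shows "(\<lambda>\<alpha>. g \<alpha> mod period k) ` {1..Suc k} = {0..<period k}"
proof -
  have "(\<lambda>\<alpha>. g \<alpha> mod period k) ` {1..Suc k} \<subseteq> {0..<period k}"
    using mod_period_range by blast
  moreover have "card ((\<lambda>\<alpha>. g \<alpha> mod period k) ` {1..Suc k}) = card {0..<period k}"
    using assms unfolding residue_inj_def by (simp add: card_image)
  ultimately show ?thesis by (metis card_subset_eq finite_atLeastLessThan_int)
qed

lemma residue_inj_cover: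
  assumes "residue_inj k g"
  shows "\<exists>\<alpha>\<in>{1..Suc k}. \<exists>m. y = g \<alpha> + m * period k"
proof -
  obtain \<alpha> where \<alpha>: "\<alpha> \<in> {1..Suc k}" "g \<alpha> mod period k = y mod period k"
  proof -
    have "y mod period k \<in> (\<lambda>\<alpha>. g \<alpha> mod period k) ` {1..Suc k}"
      using residue_inj_image[OF assms] mod_period_range[of y k] by simp
    then show ?thesis using that by force
  qed
  have "y = g \<alpha> + (y div period k - g \<alpha> div period k) * period k"
    using \<alpha>(2) div_mult_mod_eq[of y "period k"] div_mult_mod_eq[of "g \<alpha>" "period k"]
    by (simp add: left_diff_distrib)
  then show ?thesis using \<alpha>(1) by blast
qed

lemma residue_inj_unique:
  assumes "residue_inj k g" "\<alpha>1 \<in> {1..Suc k}" "\<alpha>2 \<in> {1..Suc k}"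
    and "g \<alpha>1 + m1 * period k = g \<alpha>2 + m2 * period k"
  shows "\<alpha>1 = \<alpha>2 \<and> m1 = m2"
proof -
  have "g \<alpha>1 mod period k = g \<alpha>2 mod period k"
    using arg_cong[OF assms(4), of "\<lambda>z. z mod period k"] by simp
  then have "\<alpha>1 = \<alpha>2" using assms(1-3) unfolding residue_inj_def inj_on_def by blast
  then show ?thesis using assms(4) by simp
qed

lemma window_rep_periodic:
  assumes "window_rep k f g h" "residue_inj k g"
  shows "periodic k f"
  unfolding periodic_def
proof
  fix y
  obtain \<alpha> m where \<alpha>: "\<alpha> \<in> {1..Suc k}" "y = g \<alpha> + m * period k"
    using residue_inj_cover[OF assms(2)] by blast
  have "f (y + period k) = f (g \<alpha> + (m + 1) * period k)" using \<alpha> by (simp add: algebra_simps)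
  also have "\<dots> = h \<alpha> + (m + 1) * period k" using window_repD[OF assms(1) \<alpha>(1)] by blast
  also have "\<dots> = f y + period k"
    using window_repD[OF assms(1) \<alpha>(1), of m] \<alpha>(2) by (simp add: algebra_simps)
  finally show "f (y + period k) = f y + period k" .
qed

lemma window_rep_bij:
  assumes R: "window_rep k f g h" and "residue_inj k g" "residue_inj k h"
  shows "bij f"
proof (rule bijI)
  show "inj f"
  proof (rule injI)
    fix y1 y2 assume eq: "f y1 = f y2"
    obtain \<alpha>1 m1 where 1: "\<alpha>1 \<in> {1..Suc k}" "y1 = g \<alpha>1 + m1 * period k"
      using residue_inj_cover[OF assms(2)] by blast
    obtain \<alpha>2 m2 where 2: "\<alpha>2 \<in> {1..Suc k}" "y2 = g \<alpha>2 + m2 * period k"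
      using residue_inj_cover[OF assms(2)] by blast
    have "h \<alpha>1 + m1 * period k = h \<alpha>2 + m2 * period k"
      using eq window_repD[OF R 1(1), of m1] window_repD[OF R 2(1), of m2] 1(2) 2(2) by simp
    then have "\<alpha>1 = \<alpha>2 \<and> m1 = m2" using residue_inj_unique[OF assms(3) 1(1) 2(1)] by blast
    then show "y1 = y2" using 1 2 by simp
  qed
  have "v \<in> range f" for v
  proof -
    obtain \<alpha> m where \<alpha>: "\<alpha> \<in> {1..Suc k}" "v = h \<alpha> + m * period k"
      using residue_inj_cover[OF assms(3)] by blast
    then have "v = f (g \<alpha> + m * period k)" using window_repD[OF R \<alpha>(1)] by simp
    then show ?thesis by blast
  qed
  then show "surj f" by blast
qed

definition in_window :: "nat \<Rightarrow> int \<Rightarrow> (nat \<Rightarrow> int) \<Rightarrow> bool" where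
  "in_window k w g \<longleftrightarrow>
     (\<forall>\<alpha>\<in>{1..Suc k}. w < g \<alpha> \<and> g \<alpha> \<le> w + period k) \<and> inj_on g {1..Suc k}"

lemma in_window_residue_inj:
  assumes "in_window k w g"
  shows "residue_inj k g"
  unfolding residue_inj_def inj_on_def
proof (intro ballI impI)
  fix \<alpha>1 \<alpha>2 assume \<alpha>: "\<alpha>1 \<in> {1..Suc k}" "\<alpha>2 \<in> {1..Suc k}"
    and mod_eq: "g \<alpha>1 mod period k = g \<alpha>2 mod period k"
  have range: "w < g \<alpha>1" "g \<alpha>1 \<le> w + period k" "w < g \<alpha>2" "g \<alpha>2 \<le> w + period k"
    using assms \<alpha> unfolding in_window_def by auto
  have "(g \<alpha>1 - (w + 1)) mod period k = (g \<alpha>2 - (w + 1)) mod period k"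
    using mod_eq mod_diff_left_eq[of "g \<alpha>1" "period k" "w + 1"] mod_diff_left_eq[of "g \<alpha>2" "period k" "w + 1"]
    by simp
  moreover have "(g \<alpha>1 - (w + 1)) mod period k = g \<alpha>1 - (w + 1)"
    and "(g \<alpha>2 - (w + 1)) mod period k = g \<alpha>2 - (w + 1)"
    using range by (auto intro: mod_pos_pos_trivial)
  ultimately have "g \<alpha>1 = g \<alpha>2" by simp
  then show "\<alpha>1 = \<alpha>2" using assms \<alpha> unfolding in_window_def inj_on_def by blast
qed

definition window_shift :: "nat \<Rightarrow> int \<Rightarrow> int" where
  "window_shift k z = (z - 1) div period k"

lemma window_shift_range:
  "1 \<le> z - window_shift k z * period k \<and> z - window_shift k z * period k \<le> period k"
proof -
  have "z - window_shift k z * period k = (z - 1) mod period k + 1"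
    using minus_div_mult_eq_mod[of "z - 1" "period k"] unfolding window_shift_def by linarith
  then show ?thesis using mod_period_range[of "z - 1" k] by simp
qed

lemma window_rep_sum_diff:
  assumes R: "window_rep k f g h" and W: "in_window k w g"
  shows "(\<Sum>i = 1..period k. f i - i) = (\<Sum>\<alpha> = 1..Suc k. h \<alpha> - g \<alpha>)"
proof -
  define sh where "sh \<alpha> = window_shift k (g \<alpha>)" for \<alpha>
  define \<psi> where "\<psi> \<alpha> = g \<alpha> - sh \<alpha> * period k" for \<alpha>
  have inj: "inj_on \<psi> {1..Suc k}"
  proof (rule inj_onI)
    fix \<alpha>1 \<alpha>2 assume "\<alpha>1 \<in> {1..Suc k}" "\<alpha>2 \<in> {1..Suc k}" "\<psi> \<alpha>1 = \<psi> \<alpha>2"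
    then show "\<alpha>1 = \<alpha>2"
      using residue_inj_unique[OF in_window_residue_inj[OF W], of \<alpha>1 \<alpha>2 "- sh \<alpha>1" "- sh \<alpha>2"]
      unfolding \<psi>_def by simp
  qed
  have "\<psi> ` {1..Suc k} \<subseteq> {1..period k}"
    using window_shift_range unfolding \<psi>_def sh_def by auto
  moreover have "card (\<psi> ` {1..Suc k}) = card {1..period k}"
    using inj by (simp add: card_image)
  ultimately have bb: "bij_betw \<psi> {1..Suc k} {1..period k}"
    using inj unfolding bij_betw_def by (simp add: card_subset_eq)
  have "(\<Sum>i = 1..period k. f i - i) = (\<Sum>\<alpha> = 1..Suc k. f (\<psi> \<alpha>) - \<psi> \<alpha>)"
    using sum.reindex_bij_betw[OF bb, of "\<lambda>i. f i - i"] by simp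
  also have "\<dots> = (\<Sum>\<alpha> = 1..Suc k. h \<alpha> - g \<alpha>)"
  proof (rule sum.cong[OF refl])
    fix \<alpha> assume "\<alpha> \<in> {1..Suc k}"
    then have "f (g \<alpha> + (- sh \<alpha>) * period k) = h \<alpha> + (- sh \<alpha>) * period k"
      using window_repD[OF R] by blast
    then show "f (\<psi> \<alpha>) - \<psi> \<alpha> = h \<alpha> - g \<alpha>" unfolding \<psi>_def by simp
  qed
  finally show ?thesis .
qed

lemma periodic_bij_mod_cancel:
  assumes "periodic k f" "bij f" "f y1 mod period k = f y2 mod period k"
  shows "y1 mod period k = y2 mod period k"
proof -
  define m where "m = f y1 div period k - f y2 div period k"
  have "f y1 = f y2 + m * period k"
    using assms(3) div_mult_mod_eq[of "f y1" "period k"] div_mult_mod_eq[of "f y2" "period k"]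
    unfolding m_def by (simp add: left_diff_distrib)
  also have "\<dots> = f (y2 + m * period k)" using periodicD[OF assms(1)] by simp
  finally have "y1 = y2 + m * period k" using assms(2) unfolding bij_def inj_def by blast
  then show ?thesis by simp
qed

lemma periodic_window_rep:
  assumes "periodic k f" "bij f"
  shows "window_rep k f (\<lambda>\<alpha>. int \<alpha> + c - 1) (\<lambda>\<alpha>. f (int \<alpha> + c - 1))"
    and "in_window k (c - 1) (\<lambda>\<alpha>. int \<alpha> + c - 1)"
    and "residue_inj k (\<lambda>\<alpha>. f (int \<alpha> + c - 1))"
proof -
  show "window_rep k f (\<lambda>\<alpha>. int \<alpha> + c - 1) (\<lambda>\<alpha>. f (int \<alpha> + c - 1))"
    unfolding window_rep_def using periodicD[OF assms(1)] by blast
  show W: "in_window k (c - 1) (\<lambda>\<alpha>. int \<alpha> + c - 1)"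
    unfolding in_window_def inj_on_def by auto
  show "residue_inj k (\<lambda>\<alpha>. f (int \<alpha> + c - 1))"
    using periodic_bij_mod_cancel[OF assms] in_window_residue_inj[OF W]
    unfolding residue_inj_def inj_on_def by blast
qed

section \<open>Affine inversions through a window representation\<close>

lemma finite_multiples_between:
  assumes "(0::int) < N"
  shows "finite {m. d < m * N \<and> m * N < e}"
proof -
  have "{m. d < m * N \<and> m * N < e} \<subseteq> {min d 0 .. max e 0}"
  proof
    fix m assume "m \<in> {m. d < m * N \<and> m * N < e}"
    then have m: "d < m * N" "m * N < e" by auto
    show "m \<in> {min d 0 .. max e 0}"
    proof (cases "m \<ge> 0")
      case True
      then have "m \<le> m * N" using assms by (simp add: mult_le_cancel_left1)
      then show ?thesis using True m(2) by simp
    next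
      case False
      then have "m * N \<le> m" using assms by (simp add: mult_le_cancel_left2)
      then have "d < m" using m(1) by linarith
      then show ?thesis using False by simp
    qed
  qed
  then show ?thesis by (rule finite_subset) simp
qed

lemma card_multiples_between_split:
  fixes N d e :: int
  assumes N: "0 < N" and d: "- N < d" "d < N"
  shows "card {m. d < m * N \<and> m * N < e} =
         card {m. 0 < m * N \<and> m * N < e} + (if d < 0 \<and> 0 < e then 1 else 0)"
proof (cases "d < 0")
  case True
  have "{m. d < m * N \<and> m * N < e} = {m. 0 \<le> m \<and> m * N < e}"
  proof safe
    fix m assume "d < m * N"
    show "0 \<le> m"
    proof (rule ccontr)
      assume "\<not> 0 \<le> m"
      then have "m * N \<le> -1 * N" using N by (intro mult_right_mono) auto
      then show False using \<open>d < m * N\<close> d by simp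
    qed
  next
    fix m :: int assume "0 \<le> m"
    then show "d < m * N" using True N by (smt (verit) mult_nonneg_nonneg)
  qed
  moreover have "{m. 0 \<le> m \<and> m * N < e} =
      (if 0 < e then insert 0 else id) {m. 0 < m * N \<and> m * N < e}"
    using N by (auto simp: zero_less_mult_iff le_less)
  ultimately show ?thesis using True finite_multiples_between[OF N, of 0 e] by simp
next
  case False
  have "{m. d < m * N \<and> m * N < e} = {m. 0 < m * N \<and> m * N < e}"
  proof safe
    fix m assume "0 < m * N"
    then have "1 * N \<le> m * N" using N by (intro mult_right_mono) (auto simp: zero_less_mult_iff)
    then show "d < m * N" using d(2) by simp
  qed (use False in simp)
  then show ?thesis using False by simp
qed

definition aff_inv :: "nat \<Rightarrow> (int \<Rightarrow> int) \<Rightarrow> nat" where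
  "aff_inv k f = card {(p, q). 1 \<le> p \<and> p \<le> period k \<and> p < q \<and> f q < f p}"

definition crossings :: "nat \<Rightarrow> (nat \<Rightarrow> int) \<Rightarrow> (nat \<Rightarrow> int) \<Rightarrow> nat" where
  "crossings k g h =
     card {(\<alpha>, \<beta>). \<alpha> \<in> {1..Suc k} \<and> \<beta> \<in> {1..Suc k} \<and> g \<alpha> < g \<beta> \<and> h \<beta> < h \<alpha>}"

definition wrap_count :: "nat \<Rightarrow> (nat \<Rightarrow> int) \<Rightarrow> nat" where
  "wrap_count k h = (\<Sum>\<alpha>\<in>{1..Suc k}. \<Sum>\<beta>\<in>{1..Suc k}.
     card {m::int. 0 < m * period k \<and> m * period k < h \<alpha> - h \<beta>})"

text \<open>An inversion \<open>(p, q)\<close> with \<open>p\<close> in \<open>{1..N}\<close> is the same as a triple \<open>((\<alpha>, \<beta>), m)\<close>: \<open>p\<close> is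
  the translate of \<open>g \<alpha>\<close> into \<open>{1..N}\<close> and \<open>q\<close> the translate of \<open>g \<beta>\<close> by \<open>m N\<close> further.\<close>

definition inversion_of_triple :: "nat \<Rightarrow> (nat \<Rightarrow> int) \<Rightarrow> (nat \<times> nat) \<times> int \<Rightarrow> int \<times> int" where
  "inversion_of_triple k g = (\<lambda>((\<alpha>, \<beta>), m).
     (g \<alpha> - window_shift k (g \<alpha>) * period k, g \<beta> + (m - window_shift k (g \<alpha>)) * period k))"

abbreviation inversion_triples :: "nat \<Rightarrow> (nat \<Rightarrow> int) \<Rightarrow> (nat \<Rightarrow> int) \<Rightarrow> ((nat \<times> nat) \<times> int) set" where
  "inversion_triples k g h \<equiv> SIGMA (\<alpha>, \<beta>) : {1..Suc k} \<times> {1..Suc k}.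
     {m. g \<alpha> - g \<beta> < m * period k \<and> m * period k < h \<alpha> - h \<beta>}"

lemma inj_on_inversion_of_triple:
  assumes G: "residue_inj k g"
  shows "inj_on (inversion_of_triple k g) (({1..Suc k} \<times> {1..Suc k}) \<times> UNIV)"
proof (rule inj_onI)
  fix X Y assume X: "X \<in> ({1..Suc k} \<times> {1..Suc k}) \<times> UNIV" and Y: "Y \<in> ({1..Suc k} \<times> {1..Suc k}) \<times> UNIV"
    and eq: "inversion_of_triple k g X = inversion_of_triple k g Y"
  obtain a1 b1 m1 a2 b2 m2 where xy: "X = ((a1, b1), m1)" "Y = ((a2, b2), m2)"
    by (metis prod.exhaust)
  let ?sh = "\<lambda>\<alpha>. window_shift k (g \<alpha>)"
  have mem: "a1 \<in> {1..Suc k}" "b1 \<in> {1..Suc k}" "a2 \<in> {1..Suc k}" "b2 \<in> {1..Suc k}"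
    using X Y xy by auto
  have "g a1 + (- ?sh a1) * period k = g a2 + (- ?sh a2) * period k"
    using eq xy unfolding inversion_of_triple_def by simp
  then have "a1 = a2" using residue_inj_unique[OF G mem(1,3)] by blast
  then have "g b1 + (m1 - ?sh a1) * period k = g b2 + (m2 - ?sh a1) * period k"
    using eq xy unfolding inversion_of_triple_def by simp
  then have "b1 = b2 \<and> m1 - ?sh a1 = m2 - ?sh a1" using residue_inj_unique[OF G mem(2,4)] by blast
  then show "X = Y" using xy \<open>a1 = a2\<close> by simp
qed

lemma inversion_of_triple_image:
  assumes R: "window_rep k f g h" and G: "residue_inj k g"
  shows "inversion_of_triple k g ` inversion_triples k g h =
           {(p, q). 1 \<le> p \<and> p \<le> period k \<and> p < q \<and> f q < f p}" (is "?\<phi> ` ?T = ?S")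
proof
  let ?sh = "\<lambda>\<alpha>. window_shift k (g \<alpha>)"
  have Rf: "\<alpha> \<in> {1..Suc k} \<Longrightarrow> f (g \<alpha> + m * period k) = h \<alpha> + m * period k" for \<alpha> m
    using window_repD[OF R] by blast
  show "?\<phi> ` ?T \<subseteq> ?S"
  proof
    fix Z assume "Z \<in> ?\<phi> ` ?T"
    then obtain a b m where mem: "a \<in> {1..Suc k}" "b \<in> {1..Suc k}"
      and c: "g a - g b < m * period k" "m * period k < h a - h b" and Z: "Z = ?\<phi> ((a, b), m)"
      by auto
    have "f (g a + (- ?sh a) * period k) = h a + (- ?sh a) * period k"
      "f (g b + (m - ?sh a) * period k) = h b + (m - ?sh a) * period k"
      using Rf mem by blast+
    then show "Z \<in> ?S"
      using Z c window_shift_range[of "g a" k]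
      unfolding inversion_of_triple_def by (simp add: algebra_simps)
  qed
  show "?S \<subseteq> ?\<phi> ` ?T"
  proof
    fix Z assume "Z \<in> ?S"
    then obtain p q where Z: "Z = (p, q)" and pq: "1 \<le> p" "p \<le> period k" "p < q" "f q < f p"
      by auto
    obtain a m0 where a: "a \<in> {1..Suc k}" "p = g a + m0 * period k"
      using residue_inj_cover[OF G, of p] by blast
    obtain b m1 where b: "b \<in> {1..Suc k}" "q = g b + m1 * period k"
      using residue_inj_cover[OF G, of q] by blast
    have "0 = (p - 1) div period k" using pq by (simp add: div_pos_pos_trivial)
    also have "\<dots> = ((g a - 1) + m0 * period k) div period k" using a(2) by (simp add: algebra_simps)
    also have "\<dots> = ?sh a + m0" unfolding window_shift_def by simp
    finally have m0: "m0 = - ?sh a" by simp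
    have fp: "f p = h a - ?sh a * period k" using Rf[OF a(1), of m0] a(2) m0 by simp
    have fq: "f q = h b + m1 * period k" using Rf[OF b(1)] b(2) by simp
    have "g a - g b < (m1 + ?sh a) * period k" using pq(3) a(2) b(2) m0 by (simp add: algebra_simps)
    moreover have "(m1 + ?sh a) * period k < h a - h b" using pq(4) fp fq by (simp add: algebra_simps)
    ultimately have "((a, b), m1 + ?sh a) \<in> ?T" using a(1) b(1) by simp
    moreover have "?\<phi> ((a, b), m1 + ?sh a) = Z"
      using Z a(2) b(2) m0 unfolding inversion_of_triple_def by (simp add: algebra_simps)
    ultimately show "Z \<in> ?\<phi> ` ?T" by force
  qed
qed

lemma aff_inv_eq_card_triples:
  assumes "window_rep k f g h" "residue_inj k g"
  shows "aff_inv k f = card (inversion_triples k g h)"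
proof -
  have "inj_on (inversion_of_triple k g) (inversion_triples k g h)"
    using inj_on_inversion_of_triple[OF assms(2)] by (rule inj_on_subset) auto
  then show ?thesis
    using inversion_of_triple_image[OF assms] card_image unfolding aff_inv_def by fastforce
qed

lemma aff_inv_window_formula:
  assumes R: "window_rep k f g h" and W: "in_window k w g"
  shows "aff_inv k f = wrap_count k h + crossings k g h"
proof -
  define A where "A = {1..Suc k}"
  define C where "C = (\<lambda>(\<alpha>, \<beta>). card {m::int. 0 < m * period k \<and> m * period k < h \<alpha> - h \<beta>})"
  define X where "X = (\<lambda>(\<alpha>, \<beta>). g \<alpha> < g \<beta> \<and> h \<beta> < h \<alpha>)"
  \<comment> \<open>\<open>|g \<alpha> - g \<beta>| < N\<close>, so only \<open>m = 0\<close> separates the count from \<open>C\<close>;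
    it occurs iff the pair crosses\<close>
  have split: "card {m. g \<alpha> - g \<beta> < m * period k \<and> m * period k < h \<alpha> - h \<beta>} =
      C (\<alpha>, \<beta>) + (if X (\<alpha>, \<beta>) then 1 else 0)" if "\<alpha> \<in> A" "\<beta> \<in> A" for \<alpha> \<beta>
  proof -
    have "- period k < g \<alpha> - g \<beta>" "g \<alpha> - g \<beta> < period k"
      using W that unfolding in_window_def A_def by (smt (verit))+
    from card_multiples_between_split[OF _ this] show ?thesis
      unfolding C_def X_def by simp
  qed
  have "aff_inv k f = (\<Sum>(\<alpha>, \<beta>)\<in>A \<times> A.
      card {m. g \<alpha> - g \<beta> < m * period k \<and> m * period k < h \<alpha> - h \<beta>})"
    using aff_inv_eq_card_triples[OF R in_window_residue_inj[OF W]] finite_multiples_between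
    unfolding A_def by (simp add: card_SigmaI split_def)
  also have "\<dots> = (\<Sum>x\<in>A \<times> A. C x + (if X x then 1 else 0))"
    by (rule sum.cong) (use split in auto)
  also have "\<dots> = (\<Sum>x\<in>A \<times> A. C x) + (\<Sum>x\<in>A \<times> A. if X x then 1 else 0)"
    by (rule sum.distrib)
  also have "(\<Sum>x\<in>A \<times> A. C x) = wrap_count k h"
    unfolding wrap_count_def C_def A_def sum.cartesian_product by (simp only: split_def)
  also have "(\<Sum>x\<in>A \<times> A. if X x then 1 else 0) = card {x \<in> A \<times> A. X x}"
    unfolding A_def by (simp add: sum.If_cases Int_def conj_commute)
  also have "{x \<in> A \<times> A. X x} =
      {(\<alpha>, \<beta>). \<alpha> \<in> {1..Suc k} \<and> \<beta> \<in> {1..Suc k} \<and> g \<alpha> < g \<beta> \<and> h \<beta> < h \<alpha>}"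
    unfolding A_def X_def by auto
  finally show ?thesis unfolding crossings_def .
qed

section \<open>Coxeter length equals the number of affine inversions\<close>

lemma aff_s_shift: "aff_s k i (z + m * period k) = aff_s k i z + m * period k"
  unfolding aff_s_def by simp

lemma periodic_aff_s: "periodic k (aff_s k i)"
  unfolding periodic_def using aff_s_shift[of k i _ 1] by simp

text \<open>For \<open>k = 0\<close> the two residue classes in \<open>aff_s\<close> coincide and it is the shift \<open>z \<mapsto> z + 1\<close>,
  not an involution.\<close>

lemma aff_s_involution:
  assumes "1 \<le> k"
  shows "aff_s k i (aff_s k i z) = z"
proof -
  have succ_neq: "(a + 1) mod period k \<noteq> a mod period k" for a
    using mod_add_small_neq[where d=1 and k=k] assms by auto
  show ?thesis
  proof (cases "z mod period k = int i mod period k")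
    case True
    then have "(z + 1) mod period k = (int i + 1) mod period k" by (metis mod_add_left_eq)
    moreover have "(z + 1) mod period k \<noteq> int i mod period k" using succ_neq[of z] True by simp
    ultimately show ?thesis using True unfolding aff_s_def by simp
  next
    case not_i: False
    show ?thesis
    proof (cases "z mod period k = (int i + 1) mod period k")
      case True
      then have "(z - 1) mod period k = int i mod period k"
        by (metis add_diff_cancel_right' mod_diff_left_eq)
      then show ?thesis using True not_i unfolding aff_s_def by simp
    qed (use not_i in \<open>simp add: aff_s_def\<close>)
  qed
qed

lemma bij_aff_s: "1 \<le> k \<Longrightarrow> bij (aff_s k i)"
  by (metis bij_betw_def inj_on_inverseI aff_s_involution surjI)

definition swap12 :: "nat \<Rightarrow> nat" where
  "swap12 \<alpha> = (if \<alpha> = 1 then 2 else if \<alpha> = 2 then 1 else \<alpha>)"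

lemma swap12_swap12 [simp]: "swap12 (swap12 \<alpha>) = \<alpha>"
  unfolding swap12_def by auto

lemma swap12_window: "1 \<le> k \<Longrightarrow> \<alpha> \<in> {1..Suc k} \<Longrightarrow> swap12 \<alpha> \<in> {1..Suc k}"
  unfolding swap12_def by auto

lemma aff_s_window:
  assumes "1 \<le> k" "\<alpha> \<in> {1..Suc k}"
  shows "aff_s k i (int \<alpha> + int i - 1) = int (swap12 \<alpha>) + int i - 1"
proof -
  consider "\<alpha> = 1" | "\<alpha> = 2" | "3 \<le> \<alpha>" using assms(2) by fastforce
  then show ?thesis
  proof cases
    case 1 then show ?thesis unfolding aff_s_def swap12_def by simp
  next
    case 2
    have "(int i + 1) mod period k \<noteq> int i mod period k"
      using mod_add_small_neq[where d=1 and k=k and a="int i"] assms by auto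
    then show ?thesis using 2 unfolding aff_s_def swap12_def by (simp add: add.commute)
  next
    case 3
    have "(int i + (int \<alpha> - 1)) mod period k \<noteq> int i mod period k"
      and "(int i + 1 + (int \<alpha> - 2)) mod period k \<noteq> (int i + 1) mod period k"
      using mod_add_small_neq[where d="int \<alpha> - 1" and k=k and a="int i"]
        mod_add_small_neq[where d="int \<alpha> - 2" and k=k and a="int i + 1"] assms 3
      by auto
    then have "(int \<alpha> + int i - 1) mod period k \<noteq> int i mod period k"
      and "(int \<alpha> + int i - 1) mod period k \<noteq> (int i + 1) mod period k"
      by (simp_all add: algebra_simps)
    then show ?thesis using 3 unfolding aff_s_def swap12_def by simp
  qed
qed

lemma window_rep_comp_aff_s:
  assumes k: "1 \<le> k" and P: "periodic k f"
  shows "window_rep k (f \<circ> aff_s k i) (\<lambda>\<alpha>. int (swap12 \<alpha>) + int i - 1) (\<lambda>\<alpha>. f (int \<alpha> + int i - 1))"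
    and "in_window k (int i - 1) (\<lambda>\<alpha>. int (swap12 \<alpha>) + int i - 1)"
proof -
  show "window_rep k (f \<circ> aff_s k i) (\<lambda>\<alpha>. int (swap12 \<alpha>) + int i - 1) (\<lambda>\<alpha>. f (int \<alpha> + int i - 1))"
    unfolding window_rep_def
  proof (intro ballI allI)
    fix \<alpha> m assume \<alpha>: "\<alpha> \<in> {1..Suc k}"
    have "aff_s k i (int (swap12 \<alpha>) + int i - 1 + m * period k) = int \<alpha> + int i - 1 + m * period k"
      using aff_s_shift aff_s_window[OF k swap12_window[OF k \<alpha>], of i] by simp
    then show "(f \<circ> aff_s k i) (int (swap12 \<alpha>) + int i - 1 + m * period k) =
        f (int \<alpha> + int i - 1) + m * period k"
      using periodicD[OF P] by simp
  qed
  show "in_window k (int i - 1) (\<lambda>\<alpha>. int (swap12 \<alpha>) + int i - 1)"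
    unfolding in_window_def
  proof
    show "\<forall>\<alpha>\<in>{1..Suc k}. int i - 1 < int (swap12 \<alpha>) + int i - 1 \<and>
        int (swap12 \<alpha>) + int i - 1 \<le> int i - 1 + period k"
      using swap12_window[OF k] by force
    show "inj_on (\<lambda>\<alpha>. int (swap12 \<alpha>) + int i - 1) {1..Suc k}"
      unfolding inj_on_def by (metis of_nat_eq_iff add_right_cancel diff_add_cancel swap12_swap12)
  qed
qed

lemma aff_inv_comp_aff_s:
  assumes k: "1 \<le> k" and P: "periodic k f" and B: "bij f"
  shows "f (int i) < f (int i + 1) \<Longrightarrow> aff_inv k (f \<circ> aff_s k i) = aff_inv k f + 1"
    and "f (int i + 1) < f (int i) \<Longrightarrow> aff_inv k f = aff_inv k (f \<circ> aff_s k i) + 1"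
proof -
  define g where "g = (\<lambda>\<alpha>::nat. int \<alpha> + int i - 1)"
  define g' where "g' = (\<lambda>\<alpha>::nat. int (swap12 \<alpha>) + int i - 1)"
  define h where "h = (\<lambda>\<alpha>::nat. f (int \<alpha> + int i - 1))"
  define S where "S = {(\<alpha>, \<beta>). \<alpha> \<in> {1..Suc k} \<and> \<beta> \<in> {1..Suc k} \<and> g \<alpha> < g \<beta> \<and> h \<beta> < h \<alpha>}"
  define S' where "S' = {(\<alpha>, \<beta>). \<alpha> \<in> {1..Suc k} \<and> \<beta> \<in> {1..Suc k} \<and> g' \<alpha> < g' \<beta> \<and> h \<beta> < h \<alpha>}"
  have "aff_inv k f = wrap_count k h + card S"
    using aff_inv_window_formula periodic_window_rep[OF P B, of "int i"]
    unfolding g_def h_def S_def crossings_def by blast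
  moreover have "aff_inv k (f \<circ> aff_s k i) = wrap_count k h + card S'"
    using aff_inv_window_formula window_rep_comp_aff_s[OF k P, of i]
    unfolding g'_def h_def S'_def crossings_def by blast
  moreover have "finite S" "finite S'"
    unfolding S_def S'_def by (auto intro: finite_subset[of _ "{1..Suc k} \<times> {1..Suc k}"])
  moreover have "h 1 = f (int i)" "h 2 = f (int i + 1)" unfolding h_def by (simp_all add: add.commute)
  ultimately show "f (int i) < f (int i + 1) \<Longrightarrow> aff_inv k (f \<circ> aff_s k i) = aff_inv k f + 1"
    and "f (int i + 1) < f (int i) \<Longrightarrow> aff_inv k f = aff_inv k (f \<circ> aff_s k i) + 1"
  proof -
    assume "f (int i) < f (int i + 1)"
    then have "S' = insert (2, 1) S" "(2, 1) \<notin> S"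
      using k \<open>h 1 = _\<close> \<open>h 2 = _\<close> unfolding S_def S'_def g_def g'_def swap12_def by auto
    then show "aff_inv k (f \<circ> aff_s k i) = aff_inv k f + 1"
      using \<open>finite S\<close> \<open>aff_inv k f = _\<close> \<open>aff_inv k (f \<circ> aff_s k i) = _\<close> by simp
  next
    assume "f (int i + 1) < f (int i)"
    then have "S = insert (1, 2) S'" "(1, 2) \<notin> S'"
      using k \<open>h 1 = _\<close> \<open>h 2 = _\<close> unfolding S_def S'_def g_def g'_def swap12_def by auto
    then show "aff_inv k f = aff_inv k (f \<circ> aff_s k i) + 1"
      using \<open>finite S'\<close> \<open>aff_inv k f = _\<close> \<open>aff_inv k (f \<circ> aff_s k i) = _\<close> by simp
  qed
qed

lemma aff_inv_comp_aff_s_le: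
  assumes "1 \<le> k" "periodic k f" "bij f"
  shows "aff_inv k (f \<circ> aff_s k i) \<le> aff_inv k f + 1"
proof -
  have "f (int i) \<noteq> f (int i + 1)" using assms(3) unfolding bij_def inj_def by force
  then show ?thesis using aff_inv_comp_aff_s[OF assms, of i] by linarith
qed

definition aff_word :: "nat \<Rightarrow> nat list \<Rightarrow> int \<Rightarrow> int" where
  "aff_word k ws = foldr (\<lambda>i f. aff_s k i \<circ> f) ws id"

lemma aff_word_snoc: "aff_word k (ws @ [i]) = aff_word k ws \<circ> aff_s k i"
proof -
  have "foldr (\<lambda>i f. aff_s k i \<circ> f) ws g = aff_word k ws \<circ> g" for g
    unfolding aff_word_def by (induction ws) (auto simp: comp_assoc)
  then show ?thesis unfolding aff_word_def by simp
qed

lemma aff_word_periodic_bij: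
  assumes "1 \<le> k"
  shows "periodic k (aff_word k ws) \<and> bij (aff_word k ws)"
  unfolding aff_word_def
proof (induction ws)
  case (Cons i ws)
  have "foldr (\<lambda>i f. aff_s k i \<circ> f) (i # ws) id = aff_s k i \<circ> foldr (\<lambda>i f. aff_s k i \<circ> f) ws id"
    by simp
  then show ?case
    using Cons periodic_comp[OF periodic_aff_s] bij_comp[OF _ bij_aff_s[OF assms]] by metis
qed (simp add: periodic_def bij_id[unfolded id_def])

lemma aff_len_eq_Least: "aff_len k f = (LEAST n. \<exists>ws. length ws = n \<and> (\<forall>i\<in>set ws. i \<le> k) \<and> f = aff_word k ws)"
  unfolding aff_len_def aff_word_def ..

lemma aff_inv_id: "aff_inv k id = 0"
proof -
  have e: "{(p::int, q). 1 \<le> p \<and> p \<le> period k \<and> p < q \<and> q < p} = {}" by auto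
  show ?thesis unfolding aff_inv_def id_def e by simp
qed

lemma aff_inv_aff_word_le:
  assumes "1 \<le> k"
  shows "aff_inv k (aff_word k ws) \<le> length ws"
proof (induction ws rule: rev_induct)
  case Nil then show ?case using aff_inv_id[of k] by (simp add: aff_word_def id_def)
next
  case (snoc i ws)
  have "aff_inv k (aff_word k (ws @ [i])) \<le> aff_inv k (aff_word k ws) + 1"
    unfolding aff_word_snoc using aff_inv_comp_aff_s_le[OF assms] aff_word_periodic_bij[OF assms]
    by blast
  then show ?case using snoc.IH by simp
qed

lemma affW_iff:
  "f \<in> affW k \<longleftrightarrow> bij f \<and> periodic k f \<and> (\<Sum>i = 1..period k. f i) = int ((k + 2) choose 2)"
  unfolding affW_def periodic_def by (simp add: add.assoc)

lemma sum_period_id: "(\<Sum>i = 1..period k. i) = int ((k + 2) choose 2)"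
proof (induction k)
  case (Suc k)
  have "{1..period (Suc k)} = insert (period k + 1) {1..period k}" by auto
  then have "(\<Sum>i = 1..period (Suc k). i) = (period k + 1) + (\<Sum>i = 1..period k. i)" by simp
  also have "\<dots> = int ((Suc k + 2) choose 2)" using Suc by (simp add: numeral_2_eq_2)
  finally show ?case .
qed (simp add: numeral_2_eq_2)

lemma int_strict_mono_Suc:
  fixes f :: "int \<Rightarrow> int"
  assumes "\<forall>y. f y < f (y + 1)" "a < b"
  shows "f a < f b"
proof -
  have "f a < f (a + int d + 1)" for d
  proof (induction d)
    case (Suc d)
    then show ?case using assms(1)[rule_format, of "a + int d + 1"] by (simp add: algebra_simps)
  qed (use assms(1) in simp)
  moreover have "b = a + int (nat (b - a - 1)) + 1" using assms(2) by simp
  ultimately show ?thesis by metis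
qed

lemma periodic_ascents_increasing:
  assumes P: "periodic k f" and asc: "\<forall>i\<le>k. f (int i) < f (int i + 1)"
  shows "f y < f (y + 1)"
proof -
  define j where "j = y mod period k"
  define m where "m = y div period k"
  have y: "y = j + m * period k" and y1: "y + 1 = (j + 1) + m * period k"
    unfolding j_def m_def using div_mult_mod_eq[of y "period k"] by linarith+
  have "0 \<le> j" "j < period k" unfolding j_def using mod_period_range[of y k] by simp_all
  then have "j = int (nat j)" "nat j \<le> k" by simp_all
  then have "f j < f (j + 1)" using asc by metis
  moreover have "f y = f j + m * period k" unfolding y by (rule periodicD[OF P])
  moreover have "f (y + 1) = f (j + 1) + m * period k" unfolding y1 by (rule periodicD[OF P])
  ultimately show ?thesis by simp
qed

text \<open>With no descent in the window \<open>f\<close> is increasing, hence a translation, and the sum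
  normalisation forces the translation to be trivial.\<close>

lemma affW_no_descent_id:
  assumes A: "f \<in> affW k" and asc: "\<forall>i\<le>k. f (int i) < f (int i + 1)"
  shows "f = id"
proof -
  have B: "bij f" and P: "periodic k f" and S: "(\<Sum>i = 1..period k. f i) = int ((k + 2) choose 2)"
    using A affW_iff by auto
  have inc: "\<forall>y. f y < f (y + 1)" using periodic_ascents_increasing[OF P asc] by blast
  have succ: "f (y + 1) = f y + 1" for y
  proof -
    obtain z where z: "f z = f y + 1" using B unfolding bij_def surj_def by metis
    have "\<not> z \<le> y" using int_strict_mono_Suc[OF inc, of z y] z by (cases "z = y") auto
    moreover have "\<not> y + 2 \<le> z"
    proof
      assume "y + 2 \<le> z"
      then have "f (y + 1) < f z" using int_strict_mono_Suc[OF inc, of "y + 1" z] by simp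
      moreover have "f y < f (y + 1)" using inc by blast
      ultimately show False using z by linarith
    qed
    ultimately have "z = y + 1" by linarith
    then show ?thesis using z by simp
  qed
  have lin: "f y = y + f 0" for y
  proof (induction y rule: int_induct[where k=0])
    case (step2 i) then show ?case using succ[of "i - 1"] by simp
  qed (use succ in simp_all)
  have "(\<Sum>i = 1..period k. f i) = (\<Sum>i = 1..period k. i + f 0)"
    by (rule sum.cong[OF refl]) (rule lin)
  also have "\<dots> = (\<Sum>i = 1..period k. i) + period k * f 0" by (simp add: sum.distrib)
  finally have "f 0 = 0" using S sum_period_id[of k] by simp
  show ?thesis
  proof
    fix y show "f y = id y" using lin[of y] \<open>f 0 = 0\<close> by simp
  qed
qed

lemma affW_comp_aff_s:
  assumes k: "1 \<le> k" and A: "f \<in> affW k"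
  shows "f \<circ> aff_s k i \<in> affW k"
proof -
  have B: "bij f" and P: "periodic k f" and S: "(\<Sum>i = 1..period k. f i) = int ((k + 2) choose 2)"
    using A affW_iff by auto
  define g where "g = (\<lambda>\<alpha>::nat. int \<alpha> + int i - 1)"
  define h where "h = (\<lambda>\<alpha>::nat. f (int \<alpha> + int i - 1))"
  have "(\<Sum>\<alpha> = 1..Suc k. g (swap12 \<alpha>)) = (\<Sum>\<alpha> = 1..Suc k. g \<alpha>)"
    by (rule sum.reindex_bij_witness[of _ swap12 swap12]) (use k in \<open>auto simp: swap12_def\<close>)
  moreover have "(\<Sum>j = 1..period k. f j - j) = (\<Sum>\<alpha> = 1..Suc k. h \<alpha> - g \<alpha>)"
    using window_rep_sum_diff periodic_window_rep[OF P B, of "int i"] unfolding g_def h_def by blast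
  moreover have "(\<Sum>j = 1..period k. (f \<circ> aff_s k i) j - j) = (\<Sum>\<alpha> = 1..Suc k. h \<alpha> - g (swap12 \<alpha>))"
    using window_rep_sum_diff window_rep_comp_aff_s[OF k P, of i] unfolding g_def h_def by blast
  ultimately have "(\<Sum>j = 1..period k. (f \<circ> aff_s k i) j) = (\<Sum>j = 1..period k. f j)"
    by (simp add: sum_subtractf)
  then show ?thesis
    using S B P bij_comp[OF bij_aff_s[OF k] B] periodic_comp[OF P periodic_aff_s] affW_iff by metis
qed

lemma aff_word_of_aff_inv:
  assumes k: "1 \<le> k" and "f \<in> affW k"
  shows "\<exists>ws. length ws = aff_inv k f \<and> (\<forall>i\<in>set ws. i \<le> k) \<and> f = aff_word k ws"
  using assms(2)
proof (induction "aff_inv k f" arbitrary: f)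
  case 0
  have B: "bij f" and P: "periodic k f" using 0 affW_iff by auto
  have "\<forall>i\<le>k. f (int i) < f (int i + 1)"
  proof (intro allI impI)
    fix i assume "i \<le> k"
    have "f (int i) \<noteq> f (int i + 1)" using B unfolding bij_def inj_def by force
    moreover have "\<not> f (int i + 1) < f (int i)" using aff_inv_comp_aff_s(2)[OF k P B, of i] 0(1) by auto
    ultimately show "f (int i) < f (int i + 1)" by simp
  qed
  then have "f = id" using affW_no_descent_id 0 by blast
  then show ?case using 0(1) by (intro exI[of _ "[]"]) (simp add: aff_word_def)
next
  case (Suc n)
  have B: "bij f" and P: "periodic k f" using Suc affW_iff by auto
  have "\<exists>i\<le>k. f (int i + 1) < f (int i)"
  proof (rule ccontr)
    assume "\<not> ?thesis"
    then have "\<forall>i\<le>k. f (int i) < f (int i + 1)"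
      using B unfolding bij_def inj_def by (metis add_cancel_left_right linorder_neqE_linordered_idom one_neq_zero)
    then have "f = id" using affW_no_descent_id Suc(3) by blast
    then show False using Suc(2) aff_inv_id by simp
  qed
  then obtain i where i: "i \<le> k" "f (int i + 1) < f (int i)" by blast
  have e: "aff_inv k f = aff_inv k (f \<circ> aff_s k i) + 1" using aff_inv_comp_aff_s(2)[OF k P B i(2)] .
  obtain ws where ws: "length ws = aff_inv k (f \<circ> aff_s k i)" "\<forall>j\<in>set ws. j \<le> k"
    "f \<circ> aff_s k i = aff_word k ws"
    using Suc(1)[of "f \<circ> aff_s k i"] affW_comp_aff_s[OF k Suc(3)] e Suc(2) by auto
  have "f = (f \<circ> aff_s k i) \<circ> aff_s k i" using aff_s_involution[OF k] by (auto simp: fun_eq_iff)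
  also have "\<dots> = aff_word k (ws @ [i])" using ws(3) aff_word_snoc by simp
  finally show ?case using ws e Suc(2) i(1) by (intro exI[of _ "ws @ [i]"]) auto
qed

theorem aff_len_eq_aff_inv:
  assumes k: "1 \<le> k" and A: "f \<in> affW k"
  shows "aff_len k f = aff_inv k f"
proof -
  let ?P = "\<lambda>n. \<exists>ws. length ws = n \<and> (\<forall>i\<in>set ws. i \<le> k) \<and> f = aff_word k ws"
  have ex: "?P (aff_inv k f)" using aff_word_of_aff_inv[OF k A] .
  then have "aff_len k f \<le> aff_inv k f" unfolding aff_len_eq_Least by (rule Least_le)
  moreover obtain ws where "length ws = aff_len k f" "f = aff_word k ws"
    using LeastI[of ?P, OF ex] unfolding aff_len_eq_Least by blast
  then have "aff_inv k f \<le> aff_len k f" using aff_inv_aff_word_le[OF k, of ws] by simp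
  ultimately show ?thesis by simp
qed

section \<open>Blocks cut out by a set of boundaries\<close>

text \<open>The points \<open>lo < d\<^sub>1 < \<dots> < d\<^sub>c < hi\<close> of \<open>D\<close> cut \<open>{lo + 1..hi}\<close> into the blocks
  \<open>{block_bound (i - 1) + 1 .. block_bound i}\<close>, \<open>i = 1..c + 1\<close>; \<open>alpha\<close>/\<open>blockA\<close> and
  \<open>beta\<close>/\<open>blockB\<close> are the instances \<open>(0, r)\<close> and \<open>(r, k + 1)\<close>.\<close>

definition block_bound :: "nat \<Rightarrow> nat \<Rightarrow> nat set \<Rightarrow> nat \<Rightarrow> nat" where
  "block_bound lo hi D i =
     (if i = 0 then lo else if i \<le> card D then sorted_list_of_set D ! (i - 1) else hi)"

definition block_of :: "nat \<Rightarrow> nat \<Rightarrow> nat set \<Rightarrow> nat \<Rightarrow> nat" where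
  "block_of lo hi D j = (THE i. 1 \<le> i \<and> i \<le> card D + 1 \<and>
     j \<in> {block_bound lo hi D (i - 1) + 1 .. block_bound lo hi D i})"

locale block_partition =
  fixes lo hi :: nat and D :: "nat set"
  assumes lohi: "lo < hi" and Dsub: "D \<subseteq> {lo<..<hi}"
begin

abbreviation "c \<equiv> card D"
abbreviation "L \<equiv> sorted_list_of_set D"
abbreviation "bd \<equiv> block_bound lo hi D"

lemma finite_D: "finite D" using Dsub by (rule finite_subset) simp

lemma length_L: "length L = c" using finite_D by simp
lemma set_L: "set L = D" using finite_D by simp
lemma sorted_L: "sorted_wrt (<) L" using finite_D by simp

lemma nth_L_range: "i < c \<Longrightarrow> lo < L ! i \<and> L ! i < hi"
  using set_L length_L Dsub nth_mem by (metis greaterThanLessThan_iff subsetD)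

lemma bound_Suc_less: "i < c + 1 \<Longrightarrow> bd i < bd (Suc i)"
proof -
  assume i: "i < c + 1"
  consider "i = 0" "c = 0" | "i = 0" "c > 0" | "0 < i" "i < c" | "0 < i" "i = c" using i by linarith
  then show ?thesis
  proof cases
    case 1 then show ?thesis using lohi unfolding block_bound_def by simp
  next
    case 2 then show ?thesis using nth_L_range[of 0] unfolding block_bound_def by simp
  next
    case 3
    have "L ! (i - 1) < L ! i" using sorted_wrt_nth_less[OF sorted_L, of "i - 1" i] length_L 3 by simp
    then show ?thesis using 3 unfolding block_bound_def by simp
  next
    case 4
    then show ?thesis using nth_L_range[of "i - 1"] unfolding block_bound_def by simp
  qed
qed

lemma bound_strict_mono: "i < i' \<Longrightarrow> i' \<le> c + 1 \<Longrightarrow> bd i < bd i'"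
proof (induction i')
  case 0 then show ?case by simp
next
  case (Suc i')
  have st: "bd i' < bd (Suc i')" using bound_Suc_less Suc by simp
  show ?case
  proof (cases "i = i'")
    case True then show ?thesis using st by simp
  next
    case False then show ?thesis using Suc st by simp
  qed
qed

lemma bound_mono: "i \<le> i' \<Longrightarrow> i' \<le> c + 1 \<Longrightarrow> bd i \<le> bd i'"
  using bound_strict_mono by (cases "i = i'") (auto simp: less_imp_le)

lemma bound_range: "lo \<le> bd i \<and> bd i \<le> hi"
proof (cases "i = 0 \<or> c < i")
  case True then show ?thesis using lohi unfolding block_bound_def by auto
next
  case False
  then have "i - 1 < c" by linarith
  then show ?thesis using nth_L_range[of "i - 1"] False unfolding block_bound_def by auto
qed

lemma bound_last: "bd (c + 1) = hi" unfolding block_bound_def by simp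
lemma bound_0: "bd 0 = lo" unfolding block_bound_def by simp

definition in_block :: "nat \<Rightarrow> nat \<Rightarrow> bool" where
  "in_block j i \<longleftrightarrow> 1 \<le> i \<and> i \<le> c + 1 \<and> j \<in> {bd (i - 1) + 1 .. bd i}"

lemma in_block_less:
  assumes "in_block j p" "in_block j' q" "p < q"
  shows "j < j'"
proof -
  have "bd p \<le> bd (q - 1)" using assms by (intro bound_mono) (auto simp: in_block_def)
  then show ?thesis using assms(1,2) unfolding in_block_def by simp
qed

lemma in_block_unique: "in_block j i1 \<Longrightarrow> in_block j i2 \<Longrightarrow> i1 = i2"
  using in_block_less by (metis less_irrefl linorder_neqE_nat)

lemma in_block_exists: "lo < j \<Longrightarrow> j \<le> hi \<Longrightarrow> \<exists>i. in_block j i"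
proof -
  assume j: "lo < j" "j \<le> hi"
  define I where "I = {i. 1 \<le> i \<and> i \<le> c + 1 \<and> j \<le> bd i}"
  have ne: "c + 1 \<in> I" using j bound_last unfolding I_def by simp
  define i0 where "i0 = Min I"
  have fI: "finite I" unfolding I_def by simp
  have i0I: "i0 \<in> I" using Min_in[OF fI] ne unfolding i0_def by blast
  have "bd (i0 - 1) < j"
  proof (cases "i0 = 1")
    case True then show ?thesis using j bound_0 by simp
  next
    case False
    then have "i0 - 1 \<notin> I \<or> i0 - 1 \<ge> i0" using Min_le[OF fI] unfolding i0_def by fastforce
    then show ?thesis using i0I False unfolding I_def by auto
  qed
  then have "in_block j i0" using i0I unfolding I_def in_block_def by auto
  then show ?thesis by blast
qed

lemma block_of_eq: "in_block j i \<Longrightarrow> block_of lo hi D j = i"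
  unfolding block_of_def using in_block_unique by (metis (no_types, lifting) in_block_def the_equality)

lemma in_block_block_of: "lo < j \<Longrightarrow> j \<le> hi \<Longrightarrow> in_block j (block_of lo hi D j)"
  using in_block_exists block_of_eq by blast

lemma block_of_range:
  "lo < j \<Longrightarrow> j \<le> hi \<Longrightarrow> 1 \<le> block_of lo hi D j \<and> block_of lo hi D j \<le> c + 1"
  using in_block_block_of unfolding in_block_def by blast

lemma block_of_mono:
  assumes "lo < j" "j \<le> j'" "j' \<le> hi"
  shows "block_of lo hi D j \<le> block_of lo hi D j'"
  using in_block_less[OF in_block_block_of in_block_block_of, of j' j] assms by force

lemma boundary_eq_bound: "d \<in> D \<Longrightarrow> \<exists>i. 1 \<le> i \<and> i \<le> c \<and> bd i = d"
proof -
  assume "d \<in> D"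
  then obtain t where t: "t < c" "L ! t = d" using set_L length_L by (metis in_set_conv_nth)
  then have "bd (Suc t) = d" unfolding block_bound_def by simp
  then show ?thesis using t by (intro exI[of _ "Suc t"]) auto
qed

lemma block_of_Suc_eq_not_boundary:
  "lo < j \<Longrightarrow> j < hi \<Longrightarrow> block_of lo hi D j = block_of lo hi D (Suc j) \<Longrightarrow> j \<notin> D"
proof
  assume a: "lo < j" "j < hi" "block_of lo hi D j = block_of lo hi D (Suc j)" "j \<in> D"
  obtain i where i: "1 \<le> i" "i \<le> c" "bd i = j" using boundary_eq_bound a(4) by blast
  have "in_block j i" using i bound_strict_mono[of "i - 1" i] unfolding in_block_def by auto
  then have "block_of lo hi D j = i" by (rule block_of_eq)
  moreover have "in_block (Suc j) (block_of lo hi D (Suc j))" using in_block_block_of a by simp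
  ultimately have "Suc j \<le> bd i" using a(3) unfolding in_block_def by simp
  then show False using i by simp
qed

end

section \<open>The window of \<open>u\<close>\<close>

definition descA :: "(nat \<Rightarrow> nat) \<Rightarrow> nat \<Rightarrow> nat \<Rightarrow> nat set" where
  "descA x k r = {d \<in> desc x k r. d < r}"

definition descB :: "(nat \<Rightarrow> nat) \<Rightarrow> nat \<Rightarrow> nat \<Rightarrow> nat set" where
  "descB x k r = {d \<in> desc x k r. r < d}"

text \<open>The level is \<open>-(\<ell> + 2 - i)\<close> on \<open>A\<^sub>i\<close> and \<open>m - 1\<close> on \<open>B\<^sub>m\<close>, so that \<open>p\<^sub>j = x\<^sub>j - level j \<cdot> (k + 1)\<close>.\<close>

definition level :: "(nat \<Rightarrow> nat) \<Rightarrow> nat \<Rightarrow> nat \<Rightarrow> nat \<Rightarrow> int" where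
  "level x k r j =
     (if j \<le> r then - (int (nA x k r) + 2 - int (block_of 0 r (descA x k r) j))
      else int (block_of r (k + 1) (descB x k r) j) - 1)"

lemma sorted_wrt_concat_map:
  assumes "\<forall>x\<in>set xs. sorted_wrt R (f x)"
    and "sorted_wrt (\<lambda>x y. \<forall>a\<in>set (f x). \<forall>b\<in>set (f y). R a b) xs"
  shows "sorted_wrt R (concat (map f xs))"
  using assms by (induction xs) (auto simp: sorted_wrt_append)

lemma sorted_wrt_concat_map_rev_upt:
  assumes "\<And>m. m \<in> {1..n + 1} \<Longrightarrow> sorted_wrt R (f m)"
    and "\<And>m m' a b. m' < m \<Longrightarrow> m \<le> n + 1 \<Longrightarrow> 1 \<le> m' \<Longrightarrow> a \<in> set (f m) \<Longrightarrow> b \<in> set (f m') \<Longrightarrow> R a b"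
  shows "sorted_wrt R (concat (map f (rev [1..<n + 2])))"
proof (rule sorted_wrt_concat_map)
  have "sorted_wrt (\<lambda>m m'. m' < m) (rev [1..<n + 2])"
    by (subst sorted_wrt_rev) (rule sorted_wrt_upt)
  then show "sorted_wrt (\<lambda>m m'. \<forall>a\<in>set (f m). \<forall>b\<in>set (f m'). R a b) (rev [1..<n + 2])"
    by (rule sorted_wrt_mono_rel[rotated]) (use assms(2) in auto)
qed (use assms(1) in auto)

lemma sorted_wrt_irrefl_distinct:
  assumes "sorted_wrt R xs" "\<forall>x. \<not> R x x"
  shows "distinct xs"
  using assms by (induction xs) auto

locale window_construction =
  fixes x :: "nat \<Rightarrow> nat" and k r :: nat
  assumes x_perm: "bij_betw x {1..Suc k} {1..Suc k}"
    and r_pos: "1 \<le> r" and r_le_k: "r \<le> k"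
begin

abbreviation "DA \<equiv> descA x k r"
abbreviation "DB \<equiv> descB x k r"
abbreviation "lv \<equiv> level x k r"
abbreviation "A \<equiv> {1..Suc k}"

sublocale bA: block_partition 0 r DA
  using r_pos unfolding descA_def desc_def by unfold_locales auto
sublocale bB: block_partition r "k + 1" DB
  using r_le_k unfolding descB_def desc_def by unfold_locales auto

lemma nA_eq: "nA x k r = card DA" unfolding nA_def descA_def by simp
lemma nB_eq: "nB x k r = card DB" unfolding nB_def descB_def by simp

lemma alpha_eq: "alpha x k r = block_bound 0 r DA"
  unfolding alpha_def block_bound_def nA_eq descA_def by (simp add: fun_eq_iff)

lemma beta_eq: "beta x k r = block_bound r (k + 1) DB"
  unfolding beta_def block_bound_def nB_eq descB_def by (simp add: fun_eq_iff)

lemma ppos_eq: "ppos x k r j = int (x j) - lv j * period k"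
proof -
  have "(THE i. 1 \<le> i \<and> i \<le> nA x k r + 1 \<and> j \<in> blockA x k r i) = block_of 0 r DA j"
    and "(THE i. 1 \<le> i \<and> i \<le> nB x k r + 1 \<and> j \<in> blockB x k r i) = block_of r (k + 1) DB j"
    unfolding block_of_def blockA_def blockB_def alpha_eq beta_eq nA_eq nB_eq by simp_all
  then show ?thesis unfolding ppos_def level_def by (simp add: algebra_simps)
qed

lemma level_neg: "1 \<le> j \<Longrightarrow> j \<le> r \<Longrightarrow> lv j \<le> -1"
  using bA.block_of_range[of j] unfolding level_def nA_eq by auto

lemma level_nonneg: "r < j \<Longrightarrow> j \<le> Suc k \<Longrightarrow> 0 \<le> lv j"
  using bB.block_of_range[of j] unfolding level_def by auto

lemma level_mono: "1 \<le> j \<Longrightarrow> j \<le> j' \<Longrightarrow> j' \<le> Suc k \<Longrightarrow> lv j \<le> lv j'"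
proof -
  assume j: "1 \<le> j" "j \<le> j'" "j' \<le> Suc k"
  consider "j' \<le> r" | "j \<le> r" "r < j'" | "r < j" using j by linarith
  then show ?thesis
  proof cases
    case 1 then show ?thesis using bA.block_of_mono[of j j'] j unfolding level_def by simp
  next
    case 2 then show ?thesis using level_neg[of j] level_nonneg[of j'] j by simp
  next
    case 3 then show ?thesis using bB.block_of_mono[of j j'] j unfolding level_def by simp
  qed
qed

lemma level_eq_Suc_ascent:
  assumes j: "1 \<le> j" "j \<le> k" and eq: "lv j = lv (Suc j)"
  shows "x j < x (Suc j)"
proof -
  have "j \<noteq> r" using level_neg[of r] level_nonneg[of "Suc r"] eq j r_pos by auto
  have "j \<notin> desc x k r"
  proof (cases "j < r")
    case True
    then have "block_of 0 r DA j = block_of 0 r DA (Suc j)" using eq unfolding level_def by simp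
    then show ?thesis
      using bA.block_of_Suc_eq_not_boundary[of j] j True unfolding descA_def by simp
  next
    case False
    then have "r < j" using \<open>j \<noteq> r\<close> by simp
    then have "block_of r (k + 1) DB j = block_of r (k + 1) DB (Suc j)" using eq unfolding level_def by simp
    then show ?thesis
      using bB.block_of_Suc_eq_not_boundary[of j] j \<open>r < j\<close> unfolding descB_def by simp
  qed
  then have "\<not> x (Suc j) < x j" using j \<open>j \<noteq> r\<close> unfolding desc_def by auto
  moreover have "x j \<noteq> x (Suc j)" using x_perm j unfolding bij_betw_def inj_on_def by fastforce
  ultimately show ?thesis by simp
qed

lemma level_eq_increasing:
  assumes "1 \<le> j" "j < j'" "j' \<le> Suc k" "lv j = lv j'"
  shows "x j < x j'"
  using assms
proof (induction j' rule: less_induct)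
  case (less j')
  obtain j0 where j0: "j' = Suc j0" using less by (cases j') auto
  have "lv j \<le> lv j0" "lv j0 \<le> lv j'" using level_mono[of j j0] level_mono[of j0 j'] less j0 by simp_all
  then have step: "x j0 < x j'" using level_eq_Suc_ascent[of j0] less j0 by simp
  show ?case
  proof (cases "j = j0")
    case False
    then have "x j < x j0" using less.IH[of j0] less j0 \<open>lv j \<le> lv j0\<close> \<open>lv j0 \<le> lv j'\<close> by simp
    then show ?thesis using step by simp
  qed (use step j0 in simp)
qed

definition order_rel :: "nat \<Rightarrow> nat \<Rightarrow> bool" where
  "order_rel j j' \<longleftrightarrow> lv j' < lv j \<or> (lv j = lv j' \<and> j < j')"

definition listB :: "nat \<Rightarrow> nat list" where
  "listB m = [beta x k r (m - 1) + 1 ..< beta x k r m + 1]"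

definition listA :: "nat \<Rightarrow> nat list" where
  "listA i = [alpha x k r (i - 1) + 1 ..< alpha x k r i + 1]"

lemma order_list_eq:
  "order_list x k r = concat (map listB (rev [1..<card DB + 2])) @ concat (map listA (rev [1..<card DA + 2]))"
  unfolding order_list_def listB_def listA_def nA_eq nB_eq by simp

lemma listB_mem:
  assumes "m \<in> {1..card DB + 1}" "j \<in> set (listB m)"
  shows "r < j \<and> j \<le> Suc k \<and> lv j = int m - 1"
proof -
  have ib: "bB.in_block j m" using assms unfolding bB.in_block_def listB_def beta_eq by auto
  have "r < j" "j \<le> Suc k"
    using ib bB.bound_range[of "m - 1"] bB.bound_range[of m] unfolding bB.in_block_def by auto
  then show ?thesis using bB.block_of_eq[OF ib] unfolding level_def by simp
qed

lemma listA_mem: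
  assumes "i \<in> {1..card DA + 1}" "j \<in> set (listA i)"
  shows "1 \<le> j \<and> j \<le> r \<and> lv j = - (int (card DA) + 2 - int i)"
proof -
  have ib: "bA.in_block j i" using assms unfolding bA.in_block_def listA_def alpha_eq by auto
  have "1 \<le> j" "j \<le> r"
    using ib bA.bound_range[of "i - 1"] bA.bound_range[of i] unfolding bA.in_block_def by auto
  then show ?thesis using bA.block_of_eq[OF ib] unfolding level_def nA_eq by simp
qed

lemma order_list_sorted: "sorted_wrt order_rel (order_list x k r)"
proof -
  have "sorted_wrt order_rel (concat (map listB (rev [1..<card DB + 2])))"
  proof (rule sorted_wrt_concat_map_rev_upt)
    show "sorted_wrt order_rel (listB m)" if "m \<in> {1..card DB + 1}" for m
    proof -
      have "sorted_wrt (<) (listB m)" unfolding listB_def by (rule sorted_wrt_upt)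
      then show ?thesis
        by (rule sorted_wrt_mono_rel[rotated]) (use listB_mem[OF that] in \<open>auto simp: order_rel_def\<close>)
    qed
  next
    fix m m' a b assume "m' < m" "m \<le> card DB + 1" "1 \<le> m'" "a \<in> set (listB m)" "b \<in> set (listB m')"
    then show "order_rel a b" using listB_mem[of m a] listB_mem[of m' b] unfolding order_rel_def by auto
  qed
  moreover have "sorted_wrt order_rel (concat (map listA (rev [1..<card DA + 2])))"
  proof (rule sorted_wrt_concat_map_rev_upt)
    show "sorted_wrt order_rel (listA i)" if "i \<in> {1..card DA + 1}" for i
    proof -
      have "sorted_wrt (<) (listA i)" unfolding listA_def by (rule sorted_wrt_upt)
      then show ?thesis
        by (rule sorted_wrt_mono_rel[rotated]) (use listA_mem[OF that] in \<open>auto simp: order_rel_def\<close>)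
    qed
  next
    fix m m' a b assume "m' < m" "m \<le> card DA + 1" "1 \<le> m'" "a \<in> set (listA m)" "b \<in> set (listA m')"
    then show "order_rel a b" using listA_mem[of m a] listA_mem[of m' b] unfolding order_rel_def by auto
  qed
  moreover have "order_rel a b"
    if "a \<in> set (concat (map listB (rev [1..<card DB + 2])))"
      and "b \<in> set (concat (map listA (rev [1..<card DA + 2])))" for a b
  proof -
    have "0 \<le> lv a" using that(1) listB_mem by fastforce
    moreover have "lv b < 0" using that(2) listA_mem by fastforce
    ultimately show ?thesis unfolding order_rel_def by simp
  qed
  ultimately show ?thesis unfolding order_list_eq sorted_wrt_append by blast
qed

lemma order_list_distinct: "distinct (order_list x k r)"
  using sorted_wrt_irrefl_distinct[OF order_list_sorted] unfolding order_rel_def by simp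

lemma set_order_list: "set (order_list x k r) = A"
proof
  show "set (order_list x k r) \<subseteq> A"
    using listA_mem listB_mem r_le_k unfolding order_list_eq by fastforce
  show "A \<subseteq> set (order_list x k r)"
  proof
    fix j assume j: "j \<in> A"
    show "j \<in> set (order_list x k r)"
    proof (cases "j \<le> r")
      case True
      then have "bA.in_block j (block_of 0 r DA j)" using bA.in_block_block_of j by simp
      then have "block_of 0 r DA j \<in> set (rev [1..<card DA + 2])" "j \<in> set (listA (block_of 0 r DA j))"
        unfolding bA.in_block_def listA_def alpha_eq by auto
      then show ?thesis unfolding order_list_eq by auto
    next
      case False
      then have "bB.in_block j (block_of r (k + 1) DB j)" using bB.in_block_block_of j by simp
      then have "block_of r (k + 1) DB j \<in> set (rev [1..<card DB + 2])"
        "j \<in> set (listB (block_of r (k + 1) DB j))"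
        unfolding bB.in_block_def listB_def beta_eq by auto
      then show ?thesis unfolding order_list_eq by auto
    qed
  qed
qed

lemma length_order_list: "length (order_list x k r) = Suc k"
  using distinct_card[OF order_list_distinct] set_order_list by simp

lemma order_list_nth_mem: "q < Suc k \<Longrightarrow> order_list x k r ! q \<in> A"
  using set_order_list length_order_list nth_mem by metis

lemma order_rel_nth:
  "q < q' \<Longrightarrow> q' < Suc k \<Longrightarrow> order_rel (order_list x k r ! q) (order_list x k r ! q')"
  using sorted_wrt_nth_less[OF order_list_sorted] length_order_list by simp

definition order_index :: "nat \<Rightarrow> nat" where
  "order_index j = (THE q. q < Suc k \<and> order_list x k r ! q = j)"

lemma order_index:
  assumes "j \<in> A"
  shows "order_index j < Suc k \<and> order_list x k r ! order_index j = j"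
  unfolding order_index_def
proof (rule theI')
  show "\<exists>!q. q < Suc k \<and> order_list x k r ! q = j"
    using distinct_Ex1[OF order_list_distinct] set_order_list length_order_list assms by simp
qed

text \<open>\<open>key \<alpha>\<close> is the value of \<open>u'\<close> at \<open>x \<alpha>\<close>: the rank of \<open>\<alpha>\<close> in the listing, shifted by
  \<open>x\<^sub>\<alpha> - p\<^sub>\<alpha>\<close>.\<close>

definition rank :: "nat \<Rightarrow> int" where "rank j = int (order_index j) + 1"
definition key :: "nat \<Rightarrow> int" where "key j = rank j + lv j * period k"

lemma rank_range: "j \<in> A \<Longrightarrow> 1 \<le> rank j \<and> rank j \<le> period k"
  using order_index unfolding rank_def by fastforce

lemma key_strict_mono:
  assumes ab: "a \<in> A" "b \<in> A" "a < b"
  shows "key a < key b"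
proof (cases "lv a = lv b")
  case True
  have "\<not> order_index b \<le> order_index a"
  proof
    assume "order_index b \<le> order_index a"
    moreover have "order_index b \<noteq> order_index a" using order_index ab by (metis less_irrefl)
    ultimately have "order_rel b a"
      using order_rel_nth[of "order_index b" "order_index a"] order_index[OF ab(1)] order_index[OF ab(2)]
      by simp
    then show False using True ab unfolding order_rel_def by simp
  qed
  then show ?thesis unfolding key_def rank_def using True by simp
next
  case False
  then have "lv a + 1 \<le> lv b" using level_mono[of a b] ab by simp
  then have "(lv a + 1) * period k \<le> lv b * period k" by (intro mult_right_mono) auto
  then show ?thesis using rank_range[OF ab(1)] rank_range[OF ab(2)] unfolding key_def
    by (simp add: algebra_simps)
qed

lemma key_nonpos: "a \<in> A \<Longrightarrow> a \<le> r \<Longrightarrow> key a \<le> 0"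
  using level_neg[of a] rank_range[of a] mult_right_mono[of "lv a" "-1" "period k"]
  unfolding key_def by simp

lemma key_pos: "a \<in> A \<Longrightarrow> r < a \<Longrightarrow> 0 < key a"
  using level_nonneg[of a] rank_range[of a] unfolding key_def by (simp add: add_pos_nonneg)

lemma key_residue_inj: "residue_inj k key"
proof -
  have "in_window k 0 rank" unfolding in_window_def
  proof
    show "\<forall>\<alpha>\<in>A. 0 < rank \<alpha> \<and> rank \<alpha> \<le> 0 + period k" using rank_range by fastforce
    show "inj_on rank A" unfolding inj_on_def rank_def using order_index by (metis of_nat_eq_iff add_right_cancel)
  qed
  moreover have "key a mod period k = rank a mod period k" for a unfolding key_def by simp
  ultimately show ?thesis using in_window_residue_inj unfolding residue_inj_def by simp
qed

lemma ppos_strict_mono: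
  assumes q: "q < q'" "q' < Suc k"
  shows "ppos x k r (order_list x k r ! q) < ppos x k r (order_list x k r ! q')"
proof -
  define a where "a = order_list x k r ! q"
  define b where "b = order_list x k r ! q'"
  have ab: "a \<in> A" "b \<in> A" unfolding a_def b_def using order_list_nth_mem q by auto
  have R: "order_rel a b" unfolding a_def b_def using order_rel_nth q .
  have x_range: "1 \<le> x a" "x a \<le> Suc k" "1 \<le> x b" "x b \<le> Suc k"
    using x_perm ab unfolding bij_betw_def by auto
  show ?thesis unfolding a_def[symmetric] b_def[symmetric] ppos_eq
  proof (cases "lv b < lv a")
    case True
    then have "(lv b + 1) * period k \<le> lv a * period k" by (intro mult_right_mono) auto
    then show "int (x a) - lv a * period k < int (x b) - lv b * period k"
      using x_range by (simp add: algebra_simps)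
  next
    case False
    then have "lv a = lv b" "a < b" using R unfolding order_rel_def by auto
    then show "int (x a) - lv a * period k < int (x b) - lv b * period k"
      using level_eq_increasing[of a b] ab by simp
  qed
qed

end

section \<open>Maximal chains in the \<open>r\<close>-Bruhat order\<close>

lemma Sinf_bounded_support:
  assumes "z \<in> Sinf" shows "\<exists>M. \<forall>p>M. z p = p"
proof -
  have f: "finite {i. z i \<noteq> i}" using assms unfolding Sinf_def by auto
  obtain M where "\<forall>i\<in>{i. z i \<noteq> i}. i \<le> M" using finite_nat_set_iff_bounded_le f by blast
  then show ?thesis by (metis (mono_tags, lifting) leD mem_Collect_eq)
qed

lemma finite_inversions:
  assumes "z \<in> Sinf" shows "finite {(p,q). 0 < p \<and> p < q \<and> z q < z p}"
proof -
  obtain M where M: "\<forall>p>M. z p = p" using Sinf_bounded_support[OF assms] by blast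
  define M2 where "M2 = Max (z ` {..M})"
  have zle: "p \<le> M \<Longrightarrow> z p \<le> M2" for p unfolding M2_def by (intro Max_ge) auto
  have "{(p,q). 0 < p \<and> p < q \<and> z q < z p} \<subseteq> {..max M M2} \<times> {..max M M2}"
  proof
    fix X assume "X \<in> {(p,q). 0 < p \<and> p < q \<and> z q < z p}"
    then obtain p q where X: "X = (p,q)" "p < q" "z q < z p" by auto
    show "X \<in> {..max M M2} \<times> {..max M M2}"
    proof (cases "q \<le> M")
      case True then show ?thesis using X by auto
    next
      case False
      then have "z q = q" using M by auto
      have "p \<le> M"
      proof (rule ccontr)
        assume "\<not> p \<le> M" then have "z p = p" using M by auto
        then show False using X \<open>z q = q\<close> by simp
      qed
      then have "z p \<le> M2" by (rule zle)
      then show ?thesis using X \<open>z q = q\<close> by auto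
    qed
  qed
  then show ?thesis by (rule finite_subset) auto
qed

lemma inv_len_swap_descent_less:
  assumes zS: "z \<in> Sinf" and ij: "0 < i" "i < j" and dec: "z j < z i"
  shows "inv_len (z \<circ> transp_nat i j) < inv_len z"
proof -
  define Sz where "Sz = {(p,q). 0 < p \<and> p < q \<and> z q < z p}"
  define Sw where "Sw = {(p,q). 0 < p \<and> p < q \<and> (z \<circ> transp_nat i j) q < (z \<circ> transp_nat i j) p}"
  \<comment> \<open>\<open>\<psi>\<close> injects the inversions of \<open>z \<circ> (i j)\<close> into those of \<open>z\<close> other than \<open>(i, j)\<close>\<close>
  define \<psi> where "\<psi> = (\<lambda>(p::nat,q::nat). if p = i then (if j < q then (j,q) else (i,q))
     else if p = j then (i,q) else if q = i then (p,j)
     else if q = j then (if p < i then (p,i) else (p,j)) else (p,q))"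
  have fz: "finite Sz" using finite_inversions[OF zS] unfolding Sz_def .
  have sub: "\<psi> ` Sw \<subseteq> Sz - {(i,j)}"
  proof
    fix Y assume "Y \<in> \<psi> ` Sw"
    then obtain p q where pq: "(p,q) \<in> Sw" "Y = \<psi> (p,q)" by auto
    have c: "0 < p" "p < q" "z (transp_nat i j q) < z (transp_nat i j p)" using pq(1) unfolding Sw_def by auto
    show "Y \<in> Sz - {(i,j)}"
      using c ij dec pq(2) unfolding \<psi>_def Sz_def transp_nat_def
      by (auto split: if_splits)
  qed
  have inj: "inj_on \<psi> Sw"
  proof (rule inj_onI)
    fix X Y assume X: "X \<in> Sw" and Y: "Y \<in> Sw" and e: "\<psi> X = \<psi> Y"
    obtain p q where x: "X = (p,q)" by (cases X)
    obtain p' q' where y: "Y = (p',q')" by (cases Y)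
    have c: "0 < p" "p < q" "z (transp_nat i j q) < z (transp_nat i j p)" using X x unfolding Sw_def by auto
    have c': "0 < p'" "p' < q'" "z (transp_nat i j q') < z (transp_nat i j p')" using Y y unfolding Sw_def by auto
    show "X = Y" using c c' e x y ij dec unfolding \<psi>_def transp_nat_def
      by (auto split: if_splits)
  qed
  have "(i,j) \<in> Sz" using ij dec unfolding Sz_def by auto
  then have "card (Sz - {(i,j)}) < card Sz" by (rule card_Diff1_less[OF fz])
  moreover have "card Sw \<le> card (Sz - {(i,j)})"
    using card_inj_on_le[OF inj sub] fz by simp
  ultimately show ?thesis unfolding inv_len_def Sz_def Sw_def by simp
qed

lemma Sinf_perm_window:
  assumes zS: "z \<in> Sinf" and fx: "\<And>p. p > Suc k \<Longrightarrow> z p = p"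
  shows "bij_betw z {1..Suc k} {1..Suc k}"
proof -
  have injz: "inj z" and z0: "z 0 = 0" using zS unfolding Sinf_def bij_def by auto
  have "z ` {1..Suc k} \<subseteq> {1..Suc k}"
  proof
    fix v assume "v \<in> z ` {1..Suc k}"
    then obtain \<alpha> where al: "\<alpha> \<in> {1..Suc k}" "v = z \<alpha>" by auto
    have "v \<noteq> 0"
    proof
      assume "v = 0" then have "z \<alpha> = z 0" using al z0 by simp
      then have "\<alpha> = 0" using injz unfolding inj_def by blast
      then show False using al by simp
    qed
    moreover have "\<not> v > Suc k"
    proof
      assume "v > Suc k"
      then have "z v = v" using fx by blast
      then have "v = \<alpha>" using al injz unfolding inj_def by metis
      then show False using al \<open>v > Suc k\<close> by simp
    qed
    ultimately show "v \<in> {1..Suc k}" by auto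
  qed
  moreover have "inj_on z {1..Suc k}" using injz by (simp add: inj_on_def inj_def)
  ultimately show ?thesis by (simp add: bij_betw_def card_image card_subset_eq)
qed

lemma inv_len_window:
  assumes zS: "z \<in> Sinf" and fx: "\<And>p. p > Suc k \<Longrightarrow> z p = p"
  shows "inv_len z = card {(\<alpha>, \<beta>). \<alpha> \<in> {1..Suc k} \<and> \<beta> \<in> {1..Suc k} \<and> \<beta> < \<alpha> \<and> z \<alpha> < z \<beta>}"
proof -
  have bb: "bij_betw z {1..Suc k} {1..Suc k}" using Sinf_perm_window[OF assms] .
  have "{(p,q). 0 < p \<and> p < q \<and> z q < z p} = {(p,q). p \<in> {1..Suc k} \<and> q \<in> {1..Suc k} \<and> p < q \<and> z q < z p}"
  proof (safe)
    fix p q assume h: "0 < p" "p < q" "z q < z p"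
    show qA: "q \<in> {1..Suc k}"
    proof (rule ccontr)
      assume "q \<notin> {1..Suc k}"
      then have q: "q > Suc k" using h by auto
      then have "z q = q" using fx by blast
      show False
      proof (cases "p \<le> Suc k")
        case True
        then have "z p \<in> {1..Suc k}" using bb h unfolding bij_betw_def by auto
        then show False using h \<open>z q = q\<close> q by simp
      next
        case False then have "z p = p" using fx by simp
        then show False using h \<open>z q = q\<close> by simp
      qed
    qed
    then show "p \<in> {1..Suc k}" using h by auto
  qed auto
  also have "\<dots> = (\<lambda>(\<alpha>,\<beta>). (\<beta>,\<alpha>)) ` {(\<alpha>,\<beta>). \<alpha> \<in> {1..Suc k} \<and> \<beta> \<in> {1..Suc k} \<and> \<beta> < \<alpha> \<and> z \<alpha> < z \<beta>}"
    by auto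
  finally have e: "{(p,q). 0 < p \<and> p < q \<and> z q < z p} = (\<lambda>(\<alpha>,\<beta>). (\<beta>,\<alpha>)) ` {(\<alpha>,\<beta>). \<alpha> \<in> {1..Suc k} \<and> \<beta> \<in> {1..Suc k} \<and> \<beta> < \<alpha> \<and> z \<alpha> < z \<beta>}" .
  have "inj_on (\<lambda>(\<alpha>::nat,\<beta>::nat). (\<beta>,\<alpha>)) X" for X by (auto simp: inj_on_def)
  then show ?thesis unfolding inv_len_def e by (simp add: card_image)
qed

lemma rcover_ascent:
  assumes "rcover r u w"
  obtains i j where "1 \<le> i" "i \<le> r" "r < j" "w = u \<circ> transp_nat i j" "u i < u j"
proof -
  obtain i j where ij: "1 \<le> i" "i \<le> r" "r < j" "w = u \<circ> transp_nat i j"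
    and len: "inv_len w = inv_len u + 1" and uS: "u \<in> Sinf"
    using assms unfolding rcover_def by blast
  have "inj u" using uS unfolding Sinf_def bij_def by auto
  then have "u i \<noteq> u j" using ij unfolding inj_def by (metis leD order.trans le_refl)
  moreover have "\<not> u j < u i"
  proof
    assume "u j < u i"
    then have "inv_len (u \<circ> transp_nat i j) < inv_len u" using inv_len_swap_descent_less[OF uS] ij by simp
    then show False using len ij by simp
  qed
  ultimately show ?thesis using ij that by simp
qed

lemma transp_nat_conj_values:
  assumes "z \<circ> transp_nat i j = transp_nat A B \<circ> z" "z i < z j" "A < B"
  shows "z i = A \<and> z j = B"
proof -
  have e: "z j = transp_nat A B (z i)" using fun_cong[OF assms(1), of i] unfolding transp_nat_def by simp
  consider "z i = A" | "z i = B" | "z i \<noteq> A" "z i \<noteq> B" by blast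
  then show ?thesis using e assms(2,3) unfolding transp_nat_def by cases auto
qed

locale r_chain =
  fixes r k n :: nat and x y :: "nat \<Rightarrow> nat" and ch :: "nat \<Rightarrow> nat \<Rightarrow> nat" and a b :: "nat \<Rightarrow> nat"
  assumes r_pos: "1 \<le> r"
    and x_Sinf: "x \<in> Sinf"
    and fix_k: "\<forall>\<alpha>>k + 1. x \<alpha> = \<alpha> \<and> y \<alpha> = \<alpha>"
    and r_le_k: "r \<le> k"
    and ch0: "ch 0 = x" and chn: "ch n = y"
    and ch_cover: "\<forall>i\<in>{1..n}. rcover r (ch (i - 1)) (ch i)"
    and ch_ab: "\<forall>i\<in>{1..n}. a i < b i \<and> ch i = transp_nat (a i) (b i) \<circ> ch (i - 1)"
begin

lemma chain_Sinf: "t \<le> n \<Longrightarrow> ch t \<in> Sinf"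
proof (cases t)
  case 0 then show ?thesis using x_Sinf ch0 by simp
next
  case (Suc t') assume "t \<le> n"
  then have "t \<in> {1..n}" using Suc by simp
  then show ?thesis using ch_cover unfolding rcover_def by blast
qed

lemma chain_step:
  assumes t: "t \<in> {1..n}"
  obtains i j where "1 \<le> i" "i \<le> r" "r < j" "ch t = ch (t - 1) \<circ> transp_nat i j"
    "inv_len (ch t) = inv_len (ch (t - 1)) + 1" "ch (t - 1) i < ch (t - 1) j"
    "a t = ch (t - 1) i" "b t = ch (t - 1) j"
proof -
  have cover: "rcover r (ch (t - 1)) (ch t)" using ch_cover t by blast
  then obtain i j where ij: "1 \<le> i" "i \<le> r" "r < j" "ch t = ch (t - 1) \<circ> transp_nat i j"
    and lt: "ch (t - 1) i < ch (t - 1) j"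
    by (rule rcover_ascent)
  have "a t < b t" "ch t = transp_nat (a t) (b t) \<circ> ch (t - 1)" using ch_ab t by auto
  then have "ch (t - 1) i = a t \<and> ch (t - 1) j = b t"
    using transp_nat_conj_values[of "ch (t - 1)" i j "a t" "b t"] lt ij(4) by simp
  then show ?thesis using ij lt cover that unfolding rcover_def by simp
qed

lemma chain_decreasing_above_r:
  assumes "p > r" shows "t' \<le> n \<Longrightarrow> t \<le> t' \<Longrightarrow> ch t' p \<le> ch t p"
proof (induction t')
  case 0 then show ?case by simp
next
  case (Suc t')
  show ?case
  proof (cases "t = Suc t'")
    case True then show ?thesis by simp
  next
    case False
    then have le: "ch t' p \<le> ch t p" using Suc by simp
    have tt: "Suc t' \<in> {1..n}" using Suc by simp
    obtain i j where ij: "1 \<le> i" "i \<le> r" "r < j" "ch (Suc t') = ch t' \<circ> transp_nat i j"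
      "ch t' i < ch t' j"
      using chain_step[OF tt] by (metis diff_Suc_1)
    have "ch (Suc t') p \<le> ch t' p"
      using ij assms unfolding transp_nat_def by (cases "p = j") auto
    then show ?thesis using le by simp
  qed
qed

text \<open>Values at positions above \<open>r\<close> can only decrease along the chain, and \<open>x\<close> and \<open>y\<close> both
  fix every position above \<open>k + 1\<close>.\<close>

lemma chain_fixes_above: "t \<le> n \<Longrightarrow> p > Suc k \<Longrightarrow> ch t p = p"
proof -
  assume t: "t \<le> n" and p: "p > Suc k"
  have pr: "p > r" using p r_le_k by simp
  have "ch t p \<le> ch 0 p" using chain_decreasing_above_r[OF pr t] by simp
  moreover have "ch n p \<le> ch t p" using chain_decreasing_above_r[OF pr _ t] by simp
  ultimately show ?thesis using fix_k p ch0 chn by fastforce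
qed

lemma chain_perm_window: "t \<le> n \<Longrightarrow> bij_betw (ch t) {1..Suc k} {1..Suc k}"
  using Sinf_perm_window chain_Sinf chain_fixes_above by blast

lemma chain_step_window:
  assumes t: "t \<in> {1..n}"
  obtains i j where "1 \<le> i" "i \<le> r" "r < j" "j \<le> Suc k" "ch t = ch (t - 1) \<circ> transp_nat i j"
    "inv_len (ch t) = inv_len (ch (t - 1)) + 1" "ch (t - 1) i < ch (t - 1) j"
    "a t = ch (t - 1) i" "b t = ch (t - 1) j"
proof -
  obtain i j where ij: "1 \<le> i" "i \<le> r" "r < j" "ch t = ch (t - 1) \<circ> transp_nat i j"
    "inv_len (ch t) = inv_len (ch (t - 1)) + 1" "ch (t - 1) i < ch (t - 1) j"
    "a t = ch (t - 1) i" "b t = ch (t - 1) j" using chain_step[OF t] by blast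
  have "j \<le> Suc k"
  proof (rule ccontr)
    assume "\<not> j \<le> Suc k"
    then have "ch t j = j" "ch (t - 1) j = j" using chain_fixes_above t by auto
    moreover have "j \<noteq> i" using ij(2,3) by simp
    ultimately have "ch (t - 1) i = ch (t - 1) j" using ij(4) unfolding transp_nat_def by (simp add: fun_eq_iff)
    then show False using ij(6) by simp
  qed
  then show ?thesis using ij by (intro that[of i j]) auto
qed

end

section \<open>The chain in the affine \<open>0\<close>-Bruhat graph\<close>

lemma perm_in_window:
  assumes "bij_betw z {1..Suc k} {1..Suc k}"
  shows "in_window k (- c) (\<lambda>\<alpha>. int (z \<alpha>) - c)"
proof -
  have "\<alpha> \<in> {1..Suc k} \<Longrightarrow> z \<alpha> \<in> {1..Suc k}" for \<alpha> using assms unfolding bij_betw_def by blast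
  moreover have "inj_on (\<lambda>\<alpha>. int (z \<alpha>) - c) {1..Suc k}"
    using assms unfolding bij_betw_def inj_on_def by simp
  ultimately show ?thesis unfolding in_window_def by force
qed

lemma sum_perm_window:
  "bij_betw z {1..Suc k} {1..Suc k} \<Longrightarrow> (\<Sum>\<alpha> = 1..Suc k. int (z \<alpha>)) = (\<Sum>\<alpha> = 1..Suc k. int \<alpha>)"
  using sum.reindex_bij_betw[of z "{1..Suc k}" "{1..Suc k}" int] by simp

lemma mod_window_shift_neq:
  fixes p q s m :: int
  assumes "p \<in> {1..period k}" "q \<in> {1..period k}" "p \<noteq> q"
  shows "(p - s + m * period k) mod period k \<noteq> (q - s) mod period k"
proof
  assume "(p - s + m * period k) mod period k = (q - s) mod period k"
  then have eq: "(p - s) mod period k = (q - s) mod period k" by simp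
  show False
  proof (cases "p < q")
    case True
    then show False using eq mod_add_small_neq[where a="p - s" and d="q - p" and k=k] assms by simp
  next
    case False
    then show False using eq mod_add_small_neq[where a="q - s" and d="p - q" and k=k] assms by simp
  qed
qed

text \<open>Left multiplication of the positions by the transposition \<open>(A B)\<close> is right multiplication
  of the affine permutation by \<open>t\<^bsub>A - s, B - s\<^esub>\<close>; the values are unchanged.\<close>

lemma window_rep_comp_aff_t:
  assumes R: "window_rep k f (\<lambda>\<alpha>. int (z \<alpha>) - s) h"
    and z: "bij_betw z {1..Suc k} {1..Suc k}"
    and AB: "A \<in> {1..Suc k}" "B \<in> {1..Suc k}" "A < B"
  shows "window_rep k (f \<circ> aff_t k (int A - s) (int B - s))
           (\<lambda>\<alpha>. int ((transp_nat A B \<circ> z) \<alpha>) - s) h"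
  unfolding window_rep_def
proof (intro ballI allI)
  fix \<alpha> m assume \<alpha>: "\<alpha> \<in> {1..Suc k}"
  have z\<alpha>: "z \<alpha> \<in> {1..Suc k}" using z \<alpha> unfolding bij_betw_def by auto
  have "aff_t k (int A - s) (int B - s) (int ((transp_nat A B \<circ> z) \<alpha>) - s + m * period k)
      = int (z \<alpha>) - s + m * period k"
  proof -
    consider "z \<alpha> = A" | "z \<alpha> = B" | "z \<alpha> \<noteq> A" "z \<alpha> \<noteq> B" by blast
    then show ?thesis
    proof cases
      case 1
      then show ?thesis
        using mod_window_shift_neq[of "int B" k "int A" s m] AB
        unfolding aff_t_def transp_nat_def by simp
    next
      case 2
      then show ?thesis using AB unfolding aff_t_def transp_nat_def by simp
    next
      case 3
      then show ?thesis
        using mod_window_shift_neq[of "int (z \<alpha>)" k "int A" s m]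
          mod_window_shift_neq[of "int (z \<alpha>)" k "int B" s m] z\<alpha> AB
        unfolding aff_t_def transp_nat_def by simp
    qed
  qed
  then show "(f \<circ> aff_t k (int A - s) (int B - s)) (int ((transp_nat A B \<circ> z) \<alpha>) - s + m * period k)
      = h \<alpha> + m * period k"
    using window_repD[OF R \<alpha>] by simp
qed

locale chain_setting = r_chain +
  fixes u' u :: "int \<Rightarrow> int" and s :: int
  assumes u'_def: "\<forall>q<k + 1. \<forall>m::int.
        u' (ppos x k r (order_list x k r ! q) + m * (int k + 1)) = int q + 1 + m * (int k + 1)"
    and s_def: "(\<Sum>i = 1..int k + 1. u' i) = int ((k + 2) choose 2) - s * (int k + 1)"
    and u_def: "\<forall>i. u i = u' (i + s)"
begin

lemma x_perm: "bij_betw x {1..Suc k} {1..Suc k}" using chain_perm_window[of 0] ch0 by simp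

sublocale C: window_construction x k r using x_perm r_pos r_le_k by unfold_locales

lemma k_pos: "1 \<le> k" using r_pos r_le_k by simp

lemma u'_window_rep: "window_rep k u' (\<lambda>\<alpha>. int (x \<alpha>)) C.key"
  unfolding window_rep_def
proof (intro ballI allI)
  fix \<alpha> m assume "\<alpha> \<in> {1..Suc k}"
  then have q: "C.order_index \<alpha> < k + 1" "order_list x k r ! C.order_index \<alpha> = \<alpha>"
    using C.order_index by auto
  have "u' (ppos x k r (order_list x k r ! C.order_index \<alpha>) + (m + C.lv \<alpha>) * (int k + 1))
      = int (C.order_index \<alpha>) + 1 + (m + C.lv \<alpha>) * (int k + 1)"
    using u'_def q(1) by simp
  moreover have "ppos x k r (order_list x k r ! C.order_index \<alpha>) + (m + C.lv \<alpha>) * (int k + 1)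
      = int (x \<alpha>) + m * period k"
    using q(2) C.ppos_eq[of \<alpha>] by (simp add: algebra_simps)
  ultimately show "u' (int (x \<alpha>) + m * period k) = C.key \<alpha> + m * period k"
    unfolding C.key_def C.rank_def by (simp add: algebra_simps)
qed

lemma u_window_rep: "window_rep k u (\<lambda>\<alpha>. int (x \<alpha>) - s) C.key"
  unfolding window_rep_def
proof (intro ballI allI)
  fix \<alpha> m assume "\<alpha> \<in> {1..Suc k}"
  moreover have "u (int (x \<alpha>) - s + m * period k) = u' (int (x \<alpha>) + m * period k)" using u_def by simp
  ultimately show "u (int (x \<alpha>) - s + m * period k) = C.key \<alpha> + m * period k"
    using window_repD[OF u'_window_rep] by simp
qed

lemma sum_u: "(\<Sum>i = 1..period k. u i) = int ((k + 2) choose 2)"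
proof -
  have W0: "in_window k 0 (\<lambda>\<alpha>. int (x \<alpha>))" using perm_in_window[OF x_perm, of 0] by simp
  have "(\<Sum>i = 1..period k. u i - i) = (\<Sum>\<alpha> = 1..Suc k. C.key \<alpha> - (int (x \<alpha>) - s))"
    by (rule window_rep_sum_diff[OF u_window_rep perm_in_window[OF x_perm]])
  also have "\<dots> = (\<Sum>\<alpha> = 1..Suc k. (C.key \<alpha> - int (x \<alpha>)) + s)" by (simp add: algebra_simps)
  also have "\<dots> = (\<Sum>\<alpha> = 1..Suc k. C.key \<alpha> - int (x \<alpha>)) + period k * s" by (simp add: sum.distrib)
  also have "(\<Sum>\<alpha> = 1..Suc k. C.key \<alpha> - int (x \<alpha>)) = (\<Sum>i = 1..period k. u' i - i)"
    by (rule window_rep_sum_diff[OF u'_window_rep W0, symmetric])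
  finally have "(\<Sum>i = 1..period k. u i) = (\<Sum>i = 1..period k. u' i) + period k * s"
    by (simp add: sum_subtractf)
  then show ?thesis using s_def by (simp add: algebra_simps)
qed

text \<open>Since \<open>key\<close> is increasing, the crossings of positions \<open>x\<^sup>t - s\<close> and values \<open>key\<close> are exactly
  the inversions of \<open>x\<^sup>t\<close>.\<close>

lemma crossings_chain: "t \<le> n \<Longrightarrow> crossings k (\<lambda>\<alpha>. int (ch t \<alpha>) - s) C.key = inv_len (ch t)"
proof -
  assume t: "t \<le> n"
  have "C.key \<beta> < C.key \<alpha> \<longleftrightarrow> \<beta> < \<alpha>" if "\<alpha> \<in> {1..Suc k}" "\<beta> \<in> {1..Suc k}" for \<alpha> \<beta>
  proof
    assume lt: "C.key \<beta> < C.key \<alpha>"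
    show "\<beta> < \<alpha>"
    proof (rule ccontr)
      assume "\<not> \<beta> < \<alpha>"
      then consider "\<alpha> = \<beta>" | "\<alpha> < \<beta>" by linarith
      then show False using lt C.key_strict_mono[OF that] by cases auto
    qed
  qed (rule C.key_strict_mono[OF that(2,1)])
  then have "{(\<alpha>, \<beta>). \<alpha> \<in> {1..Suc k} \<and> \<beta> \<in> {1..Suc k} \<and> int (ch t \<alpha>) - s < int (ch t \<beta>) - s \<and> C.key \<beta> < C.key \<alpha>}
      = {(\<alpha>, \<beta>). \<alpha> \<in> {1..Suc k} \<and> \<beta> \<in> {1..Suc k} \<and> \<beta> < \<alpha> \<and> ch t \<alpha> < ch t \<beta>}"
    by auto
  then show ?thesis
    using inv_len_window[OF chain_Sinf[OF t] chain_fixes_above[OF t]] unfolding crossings_def by simp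
qed

lemma chain_window_rep_affW:
  assumes t: "t \<le> n" and R: "window_rep k f (\<lambda>\<alpha>. int (ch t \<alpha>) - s) C.key"
  shows "f \<in> affW k" and "aff_inv k f = wrap_count k C.key + inv_len (ch t)"
proof -
  have z: "bij_betw (ch t) {1..Suc k} {1..Suc k}" using chain_perm_window t .
  have W: "in_window k (- s) (\<lambda>\<alpha>. int (ch t \<alpha>) - s)" using perm_in_window[OF z] .
  have "(\<Sum>i = 1..period k. f i - i) = (\<Sum>\<alpha> = 1..Suc k. C.key \<alpha> - (int (ch t \<alpha>) - s))"
    by (rule window_rep_sum_diff[OF R W])
  also have "\<dots> = (\<Sum>\<alpha> = 1..Suc k. C.key \<alpha> + s) - (\<Sum>\<alpha> = 1..Suc k. int (ch t \<alpha>))"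
    by (simp add: sum_subtractf algebra_simps)
  also have "\<dots> = (\<Sum>\<alpha> = 1..Suc k. C.key \<alpha> + s) - (\<Sum>\<alpha> = 1..Suc k. int (x \<alpha>))"
    using sum_perm_window[OF z] sum_perm_window[OF x_perm] by simp
  also have "\<dots> = (\<Sum>\<alpha> = 1..Suc k. C.key \<alpha> - (int (x \<alpha>) - s))"
    by (simp add: sum_subtractf algebra_simps)
  also have "\<dots> = (\<Sum>i = 1..period k. u i - i)"
    by (rule window_rep_sum_diff[OF u_window_rep perm_in_window[OF x_perm], symmetric])
  finally have "(\<Sum>i = 1..period k. f i) = (\<Sum>i = 1..period k. u i)" by (simp add: sum_subtractf)
  then show "f \<in> affW k"
    using affW_iff sum_u window_rep_bij[OF R in_window_residue_inj[OF W] C.key_residue_inj]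
      window_rep_periodic[OF R in_window_residue_inj[OF W]] by simp
  show "aff_inv k f = wrap_count k C.key + inv_len (ch t)"
    using aff_inv_window_formula[OF R W] crossings_chain[OF t] by simp
qed

lemma u_W0: "u \<in> affW0 k"
proof -
  have A: "u \<in> affW k" using chain_window_rep_affW(1)[of 0 u] u_window_rep ch0 by simp
  then have B: "bij u" using affW_iff by blast
  have inv_u: "inv u (int q + 1) = ppos x k r (order_list x k r ! q) - s" if "q < Suc k" for q
  proof -
    have "u' (ppos x k r (order_list x k r ! q) + 0 * (int k + 1)) = int q + 1 + 0 * (int k + 1)"
      using u'_def[rule_format, of q 0] that by simp
    then have "u (ppos x k r (order_list x k r ! q) - s) = int q + 1" using u_def by simp
    then show ?thesis using B by (metis bij_def inv_f_f)
  qed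
  show ?thesis unfolding affW0_def
  proof (intro CollectI conjI allI impI A)
    fix i j :: int assume ij: "1 \<le> i \<and> i < j \<and> j \<le> int k + 1"
    define q where "q = nat (i - 1)"
    define q' where "q' = nat (j - 1)"
    have qq: "i = int q + 1" "j = int q' + 1" "q < q'" "q' < Suc k"
      using ij unfolding q_def q'_def by auto
    show "inv u i < inv u j"
      unfolding qq(1,2) using inv_u[of q] inv_u[of q'] qq C.ppos_strict_mono[OF qq(3,4)] by simp
  qed
qed

lemma tmul_chain_step:
  assumes t: "Suc t \<in> {1..n}" and R: "window_rep k f (\<lambda>\<alpha>. int (ch t \<alpha>) - s) C.key"
  defines "f' \<equiv> f \<circ> aff_t k (int (a (Suc t)) - s) (int (b (Suc t)) - s)"
  shows "window_rep k f' (\<lambda>\<alpha>. int (ch (Suc t) \<alpha>) - s) C.key"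
    and "tmul k (Some f) (int (a (Suc t)) - s) (int (b (Suc t)) - s) = Some f'"
proof -
  obtain i j where ij: "1 \<le> i" "i \<le> r" "r < j" "j \<le> Suc k"
    and "ch (Suc t) = ch t \<circ> transp_nat i j"
    and len: "inv_len (ch (Suc t)) = inv_len (ch t) + 1"
    and lt: "ch t i < ch t j"
    and ab: "a (Suc t) = ch t i" "b (Suc t) = ch t j"
    using chain_step_window[OF t] by auto
  have z: "bij_betw (ch t) {1..Suc k} {1..Suc k}" using chain_perm_window t by simp
  have ij_window: "i \<in> {1..Suc k}" "j \<in> {1..Suc k}" using ij r_le_k by auto
  have AB: "a (Suc t) \<in> {1..Suc k}" "b (Suc t) \<in> {1..Suc k}" "a (Suc t) < b (Suc t)"
    using z ij_window lt ab unfolding bij_betw_def by auto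
  have ch_Suc: "ch (Suc t) = transp_nat (a (Suc t)) (b (Suc t)) \<circ> ch t"
    using bspec[OF ch_ab t] by simp
  show R': "window_rep k f' (\<lambda>\<alpha>. int (ch (Suc t) \<alpha>) - s) C.key"
    using window_rep_comp_aff_t[OF R z AB] unfolding f'_def ch_Suc .
  have tn: "t \<le> n" "Suc t \<le> n" using t by auto
  have "aff_len k f' = aff_inv k f'"
    using aff_len_eq_aff_inv[OF k_pos chain_window_rep_affW(1)[OF tn(2) R']] .
  also have "\<dots> = aff_inv k f + 1"
    using chain_window_rep_affW(2)[OF tn(2) R'] chain_window_rep_affW(2)[OF tn(1) R] len by simp
  also have "aff_inv k f = aff_len k f"
    using aff_len_eq_aff_inv[OF k_pos chain_window_rep_affW(1)[OF tn(1) R]] by simp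
  finally have "aff_len k f' = aff_len k f + 1" .
  moreover have "f (int (a (Suc t)) - s) = C.key i" "f (int (b (Suc t)) - s) = C.key j"
    using window_repD[OF R ij_window(1), of 0] window_repD[OF R ij_window(2), of 0] ab by simp_all
  ultimately show "tmul k (Some f) (int (a (Suc t)) - s) (int (b (Suc t)) - s) = Some f'"
    using C.key_nonpos[OF ij_window(1) ij(2)] C.key_pos[OF ij_window(2) ij(3)] AB
    unfolding tmul_def f'_def by auto
qed

lemma apply_chain_prefix:
  "t \<le> n \<Longrightarrow> \<exists>f. apply_chain k u (map (\<lambda>i. int (a i) - s) [1..<t + 1]) (map (\<lambda>i. int (b i) - s) [1..<t + 1])
      = Some f \<and> window_rep k f (\<lambda>\<alpha>. int (ch t \<alpha>) - s) C.key"
proof (induction t)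
  case 0 then show ?case using u_window_rep ch0 by (simp add: apply_chain_def)
next
  case (Suc t)
  then obtain f where f: "apply_chain k u (map (\<lambda>i. int (a i) - s) [1..<t + 1]) (map (\<lambda>i. int (b i) - s) [1..<t + 1])
      = Some f" and R: "window_rep k f (\<lambda>\<alpha>. int (ch t \<alpha>) - s) C.key" by auto
  have "apply_chain k u (map (\<lambda>i. int (a i) - s) [1..<Suc t + 1]) (map (\<lambda>i. int (b i) - s) [1..<Suc t + 1])
      = tmul k (Some f) (int (a (Suc t)) - s) (int (b (Suc t)) - s)"
    using f unfolding apply_chain_def by simp
  then show ?case using tmul_chain_step[OF _ R] Suc.prems by auto
qed

end

theorem mainTheorem3:
  fixes r k n :: nat and x y :: "nat \<Rightarrow> nat"
    and ch :: "nat \<Rightarrow> nat \<Rightarrow> nat" and a b :: "nat \<Rightarrow> nat"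
    and u' u :: "int \<Rightarrow> int" and s :: int
  assumes r_pos: "1 \<le> r"
    and xS: "x \<in> Sinf" and yS: "y \<in> Sinf"
    and nonempty: "rle r x y"
    and fix_k: "\<forall>\<alpha>>k + 1. x \<alpha> = \<alpha> \<and> y \<alpha> = \<alpha>"
    and r_le_k: "r \<le> k"
    and u'_def: "\<forall>q<k + 1. \<forall>m::int.
        u' (ppos x k r (order_list x k r ! q) + m * (int k + 1)) = int q + 1 + m * (int k + 1)"
    and s_def: "(\<Sum>i = 1..int k + 1. u' i) = int ((k + 2) choose 2) - s * (int k + 1)"
    and u_def: "\<forall>i. u i = u' (i + s)"
    and ch0: "ch 0 = x" and chn: "ch n = y"
    and ch_cover: "\<forall>i\<in>{1..n}. rcover r (ch (i - 1)) (ch i)"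
    and ch_ab: "\<forall>i\<in>{1..n}. a i < b i \<and> ch i = transp_nat (a i) (b i) \<circ> ch (i - 1)"
  shows "u \<in> affW0 k \<and>
         apply_chain k u (map (\<lambda>i. int (a i) - s) [1..<n + 1]) (map (\<lambda>i. int (b i) - s) [1..<n + 1]) \<noteq> None"
proof -
  interpret chain_setting r k n x y ch a b u' u s
    using r_pos xS fix_k r_le_k ch0 chn ch_cover ch_ab u'_def s_def u_def by unfold_locales
  show ?thesis using u_W0 apply_chain_prefix[of n] by auto
qed

end
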